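(* Let $\pi$ be a probability distribution on $(\mathsf{X},\mathscr{X})$ and $T_{1},T_{-1}$ sub-stochastic kernels on $\mathsf{X}$ with $\pi({\rm d}x)T_{1}(x,{\rm d}y)=\pi({\rm d}y)T_{-1}(y,{\rm d}x)$. Let $E=\mathsf{X}\times\{-1,1\}$, $\mu({\rm d}(x,v))=\tfrac12\pi({\rm d}x)\mathbb{I}\{v\in\{-1,1\}\}$ and $Qf(x,v)=f(x,-v)$. Call a pair of functions $\rho_{1,-1},\rho_{-1,1}:\mathsf{X}\to\mathbb{R}$ a switching rate if for all $(x,v)\in E$, $0\leq\rho_{v,-v}(x)\leq1-T_{v}(x,\mathsf{X})$ and $\rho_{v,-v}(x)-\rho_{-v,v}(x)=T_{-v}(x,\mathsf{X})-T_{v}(x,\mathsf{X})$, and for such $\rho$ define \[P^{{\rm lifted},\rho}\big((x,v);{\rm d}(y,w)\big)=\mathbb{I}\{w=v\}\big[T_{v}(x,{\rm d}y)+\delta_{x}({\rm d}y)\big(1-T_{v}(x,\mathsf{X})-\rho_{v,-v}(x)\big)\big]+\mathbb{I}\{w=-v\}\delta_{x}({\rm d}y)\rho_{v,-v}(x).\] Let $\tilde\rho_{v,-v}(x)=\max\{0,T_{-v}(x,\mathsf{X})-T_{v}(x,\mathsf{X})\}$. Then for any switching rate $\rho$, any $f\in L^{2}(\mu)$ with $Qf=f$ and any $\lambda\in[0,1)$, \[{\rm var}_{\lambda}(f,P^{{\rm lifted},\tilde\rho})\leq{\rm var}_{\lambda}(f,P^{{\rm lifted},\rho})\leq{\rm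 var}_{\lambda}(f,P^{{\rm lifted},1-T_{v}}),\] where $P^{{\rm lifted},1-T_{v}}$ uses $\rho_{v,-v}(x)=1-T_{v}(x,\mathsf{X})$.
   Context: For a Markov kernel $P$ on $E$ leaving $\mu$ invariant, $\lambda\in[0,1)$, $f\in L^{2}(\mu)$ and $\bar f=f-\mu(f)$: ${\rm var}_{\lambda}(f,P)=\|\bar f\|_{\mu}^{2}+2\sum_{k\geq1}\lambda^{k}\langle\bar f,P^{k}\bar f\rangle_{\mu}$, with $\langle f,g\rangle_{\mu}=\int fg\,{\rm d}\mu$. *)

theory Defs
  imports "HOL-Probability.Probability"
begin

text \<open>Velocities are integers restricted to {-1,1}. Kernels are indexed by velocity:
  T v x is the sub-probability measure T_v(x, .).\<close>

definition sub_stochastic_kernel :: "'a measure \<Rightarrow> ('a \<Rightarrow> 'a measure) \<Rightarrow> bool" where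
  "sub_stochastic_kernel M K \<longleftrightarrow> K \<in> M \<rightarrow>\<^sub>M subprob_algebra M"

definition lift_measure :: "'a measure \<Rightarrow> ('a \<times> int) measure" where
  "lift_measure \<pi> = \<pi> \<Otimes>\<^sub>M uniform_count_measure {-1, 1}"

text \<open>Switching rate: rho v x stands for rho_{v,-v}(x). Measurability is required so
  that the lifted kernel is a Markov kernel.\<close>
definition switching_rate ::
  "'a measure \<Rightarrow> (int \<Rightarrow> 'a \<Rightarrow> 'a measure) \<Rightarrow> (int \<Rightarrow> 'a \<Rightarrow> real) \<Rightarrow> bool" where
  "switching_rate \<pi> T \<rho> \<longleftrightarrow>
     (\<forall>v\<in>{-1,1}. \<rho> v \<in> borel_measurable \<pi>) \<and>
     (\<forall>x\<in>space \<pi>. \<forall>v\<in>{-1,1::int}.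
        0 \<le> \<rho> v x \<and> \<rho> v x \<le> 1 - measure (T v x) (space \<pi>) \<and>
        \<rho> v x - \<rho> (-v) x = measure (T (-v) x) (space \<pi>) - measure (T v x) (space \<pi>))"

definition lifted_op ::
  "'a measure \<Rightarrow> (int \<Rightarrow> 'a \<Rightarrow> 'a measure) \<Rightarrow> (int \<Rightarrow> 'a \<Rightarrow> real)
    \<Rightarrow> ('a \<times> int \<Rightarrow> real) \<Rightarrow> ('a \<times> int \<Rightarrow> real)" where
  "lifted_op \<pi> T \<rho> g = (\<lambda>(x, v).
      (\<integral>y. g (y, v) \<partial>(T v x))
      + g (x, v) * (1 - measure (T v x) (space \<pi>) - \<rho> v x)
      + g (x, -v) * \<rho> v x)"

definition var_lambda ::
  "'b measure \<Rightarrow> (('b \<Rightarrow> real) \<Rightarrow> ('b \<Rightarrow> real)) \<Rightarrow> real \<Rightarrow> ('b \<Rightarrow> real) \<Rightarrow> real" where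
  "var_lambda \<mu> P lam f =
     (let fb = (\<lambda>z. f z - integral\<^sup>L \<mu> f) in
       (\<integral>z. (fb z)\<^sup>2 \<partial>\<mu>)
       + 2 * (\<Sum>k. lam ^ (Suc k) * (\<integral>z. fb z * (P ^^ Suc k) fb z \<partial>\<mu>)))"

end

theory Submission
  imports Defs
begin

text \<open>
  Write \<open>P\<^sub>\<rho>\<close> for the lifted kernel with switching rate \<open>\<rho>\<close>, \<open>Q\<close> for the velocity flip and
  \<open>\<langle>_, _\<rangle>\<close> for the inner product of \<open>L\<^sup>2(\<mu>)\<close>. Reversibility of the pair \<open>(T 1, T (-1))\<close>
  makes every \<open>P\<^sub>\<rho>\<close> a contraction with \<open>\<langle>u, P\<^sub>\<rho> g\<rangle> = \<langle>Q P\<^sub>\<rho> Q u, g\<rangle>\<close>.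
  For rates \<open>\<rho>\<^sub>0 \<le> \<rho>\<^sub>1\<close> we have \<open>P\<^sub>1 = P\<^sub>0 + E\<close> with \<open>E g = c (Q g - g)\<close>, where
  \<open>c = \<rho>\<^sub>1 - \<rho>\<^sub>0 \<ge> 0\<close> is flip invariant; hence \<open>Q E = - E\<close> and \<open>\<langle>a, E a\<rangle> \<le> 0\<close>.
  For \<open>Q\<close>-invariant \<open>f\<close> the partial sums \<open>a\<^sub>i = \<Sum>k<N. \<lambda>\<^sup>k P\<^sub>i\<^sup>k f\<close> satisfy
  \<open>(I - \<lambda> P\<^sub>i) a\<^sub>i = f - \<lambda>\<^sup>N P\<^sub>i\<^sup>N f\<close>, and these identities combine, with \<open>d = a\<^sub>1 - a\<^sub>0\<close>, to
  \<open>\<langle>f, a\<^sub>1\<rangle> - \<langle>f, a\<^sub>0\<rangle> = \<langle>d, (I - \<lambda> P\<^sub>0) d\<rangle> - \<lambda> \<langle>a\<^sub>1, E a\<^sub>1\<rangle> + O(\<lambda>\<^sup>N)\<close>,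
  whose main terms are nonnegative. As \<open>N \<rightarrow> \<infinity>\<close>, the series \<open>\<Sum>k. \<lambda>\<^sup>k \<langle>f, P\<^sup>k f\<rangle>\<close> is thus
  seen to increase with the switching rate, and so does
  \<open>var\<^sub>\<lambda> = 2 \<Sum>k. \<lambda>\<^sup>k \<langle>f\<^sub>0, P\<^sup>k f\<^sub>0\<rangle> - \<langle>f\<^sub>0, f\<^sub>0\<rangle>\<close> for the centred \<open>f\<^sub>0\<close>.
  The rates \<open>max 0 (T\<^sub>-\<^sub>v(x, X) - T\<^sub>v(x, X))\<close> and \<open>1 - T\<^sub>v(x, X)\<close> are the smallest and the
  largest switching rates.
\<close>

section \<open>Square-integrable functions\<close>

definition square_integrable :: "'b measure \<Rightarrow> ('b \<Rightarrow> real) \<Rightarrow> bool" where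
  "square_integrable M g \<longleftrightarrow> g \<in> borel_measurable M \<and> integrable M (\<lambda>z. (g z)\<^sup>2)"

lemma square_integrable_borel_measurable: "square_integrable M g \<Longrightarrow> g \<in> borel_measurable M"
  by (simp add: square_integrable_def)

lemma abs_mult_le_half_sum_squares: "\<bar>a * b\<bar> \<le> (a\<^sup>2 + (b::real)\<^sup>2) / 2"
  using sum_squares_bound[of "\<bar>a\<bar>" "\<bar>b\<bar>"] by (simp add: abs_mult power2_eq_square)

lemma integrable_mult_square_integrable:
  assumes "square_integrable M u" "square_integrable M w"
  shows "integrable M (\<lambda>z. u z * w z)"
proof (rule Bochner_Integration.integrable_bound)
  show "integrable M (\<lambda>z. ((u z)\<^sup>2 + (w z)\<^sup>2) / 2)"
    using assms by (auto simp: square_integrable_def)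
  show "AE z in M. norm (u z * w z) \<le> norm (((u z)\<^sup>2 + (w z)\<^sup>2) / 2)"
    using abs_mult_le_half_sum_squares by auto
qed (use assms in \<open>auto simp: square_integrable_def\<close>)

lemma square_integrable_add:
  assumes "square_integrable M u" "square_integrable M w"
  shows "square_integrable M (\<lambda>z. u z + w z)"
  using assms integrable_mult_right[OF integrable_mult_square_integrable[OF assms], of 2]
  by (auto simp: square_integrable_def power2_sum mult.assoc)

lemma square_integrable_cmult: "square_integrable M u \<Longrightarrow> square_integrable M (\<lambda>z. c * u z)"
  by (auto simp: square_integrable_def power_mult_distrib)

lemma square_integrable_diff:
  "square_integrable M u \<Longrightarrow> square_integrable M w \<Longrightarrow> square_integrable M (\<lambda>z. u z - w z)"
  using square_integrable_add[of M u "\<lambda>z. -1 * w z"] square_integrable_cmult[of M w "-1"] by simp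

lemma square_integrable_sum:
  "finite K \<Longrightarrow> (\<And>k. k \<in> K \<Longrightarrow> square_integrable M (g k)) \<Longrightarrow>
    square_integrable M (\<lambda>z. \<Sum>k\<in>K. g k z)"
proof (induction K rule: finite_induct)
  case (insert k K)
  then show ?case using square_integrable_add[of M "g k" "\<lambda>z. \<Sum>k\<in>K. g k z"] by simp
qed (simp add: square_integrable_def)

lemma (in finite_measure) square_integrable_const: "square_integrable M (\<lambda>z. c)"
  by (simp add: square_integrable_def)

lemma (in finite_measure) integrable_square_integrable: "square_integrable M g \<Longrightarrow> integrable M g"
  by (simp add: square_integrable_def square_integrable_imp_integrable)

lemma square_integrable_bounded_mult:
  assumes "square_integrable M u" "c \<in> borel_measurable M" "\<And>z. z \<in> space M \<Longrightarrow> \<bar>c z\<bar> \<le> B"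
  shows "square_integrable M (\<lambda>z. c z * u z)"
  unfolding square_integrable_def
proof
  show "integrable M (\<lambda>z. (c z * u z)\<^sup>2)"
  proof (rule Bochner_Integration.integrable_bound)
    show "integrable M (\<lambda>z. B\<^sup>2 * (u z)\<^sup>2)"
      using assms by (auto simp: square_integrable_def)
    have "(c z)\<^sup>2 \<le> B\<^sup>2" if "z \<in> space M" for z
      using assms(3)[OF that] by (metis abs_ge_zero power2_abs power_mono)
    then show "AE z in M. norm ((c z * u z)\<^sup>2) \<le> norm (B\<^sup>2 * (u z)\<^sup>2)"
      by (auto intro!: AE_I2 simp: power_mult_distrib mult_right_mono)
  qed (use assms in \<open>auto simp: square_integrable_def\<close>)
qed (use assms in \<open>auto simp: square_integrable_def\<close>)

definition L2_inner :: "'b measure \<Rightarrow> ('b \<Rightarrow> real) \<Rightarrow> ('b \<Rightarrow> real) \<Rightarrow> real" where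
  "L2_inner M u w = (\<integral>z. u z * w z \<partial>M)"

lemma L2_inner_commute: "L2_inner M u w = L2_inner M w u"
  unfolding L2_inner_def by (simp add: mult.commute)

lemma L2_inner_self_nonneg: "0 \<le> L2_inner M u u"
  unfolding L2_inner_def by simp

lemma L2_inner_cmult_right: "L2_inner M u (\<lambda>z. c * w z) = c * L2_inner M u w"
  unfolding L2_inner_def by (simp add: algebra_simps)

lemma L2_inner_cmult_left: "L2_inner M (\<lambda>z. c * w z) u = c * L2_inner M w u"
  unfolding L2_inner_def by (simp add: algebra_simps)

lemma L2_inner_add_right:
  "square_integrable M u \<Longrightarrow> square_integrable M w \<Longrightarrow> square_integrable M y \<Longrightarrow>
    L2_inner M u (\<lambda>z. w z + y z) = L2_inner M u w + L2_inner M u y"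
  unfolding L2_inner_def
  using integrable_mult_square_integrable[of M u w] integrable_mult_square_integrable[of M u y]
  by (simp add: distrib_left)

lemma L2_inner_diff_right:
  "square_integrable M u \<Longrightarrow> square_integrable M w \<Longrightarrow> square_integrable M y \<Longrightarrow>
    L2_inner M u (\<lambda>z. w z - y z) = L2_inner M u w - L2_inner M u y"
  unfolding L2_inner_def
  using integrable_mult_square_integrable[of M u w] integrable_mult_square_integrable[of M u y]
  by (simp add: right_diff_distrib)

lemma L2_inner_diff_left:
  "square_integrable M u \<Longrightarrow> square_integrable M w \<Longrightarrow> square_integrable M y \<Longrightarrow>
    L2_inner M (\<lambda>z. w z - y z) u = L2_inner M w u - L2_inner M y u"
  using L2_inner_diff_right[of M u w y] by (simp add: L2_inner_commute)

lemma L2_inner_sum_right: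
  "finite K \<Longrightarrow> square_integrable M u \<Longrightarrow> (\<And>k. k \<in> K \<Longrightarrow> square_integrable M (g k)) \<Longrightarrow>
    L2_inner M u (\<lambda>z. \<Sum>k\<in>K. g k z) = (\<Sum>k\<in>K. L2_inner M u (g k))"
  unfolding L2_inner_def using integrable_mult_square_integrable[of M u]
  by (simp add: sum_distrib_left)

lemma L2_inner_sum_left:
  "finite K \<Longrightarrow> square_integrable M u \<Longrightarrow> (\<And>k. k \<in> K \<Longrightarrow> square_integrable M (g k)) \<Longrightarrow>
    L2_inner M (\<lambda>z. \<Sum>k\<in>K. g k z) u = (\<Sum>k\<in>K. L2_inner M (g k) u)"
  using L2_inner_sum_right[of K M u g] by (simp add: L2_inner_commute)

lemma L2_inner_cong_AE:
  "square_integrable M u \<Longrightarrow> square_integrable M w \<Longrightarrow> square_integrable M y \<Longrightarrow>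
    AE z in M. w z = y z \<Longrightarrow> L2_inner M u w = L2_inner M u y"
  unfolding L2_inner_def by (rule integral_cong_AE) (auto simp: square_integrable_def)

lemma L2_inner_abs_le:
  assumes "square_integrable M u" "square_integrable M w"
  shows "\<bar>L2_inner M u w\<bar> \<le> (L2_inner M u u + L2_inner M w w) / 2"
proof -
  have "\<bar>L2_inner M u w\<bar> \<le> (\<integral>z. \<bar>u z * w z\<bar> \<partial>M)"
    unfolding L2_inner_def by (rule integral_abs_bound)
  also have "\<dots> \<le> (\<integral>z. ((u z)\<^sup>2 + (w z)\<^sup>2) / 2 \<partial>M)"
  proof (rule integral_mono)
    show "\<bar>u z * w z\<bar> \<le> ((u z)\<^sup>2 + (w z)\<^sup>2) / 2" for z
      by (rule abs_mult_le_half_sum_squares)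
  qed (use assms integrable_mult_square_integrable[OF assms] in \<open>auto simp: square_integrable_def\<close>)
  also have "\<dots> = (L2_inner M u u + L2_inner M w w) / 2"
    using assms by (simp add: L2_inner_def square_integrable_def power2_eq_square)
  finally show ?thesis .
qed

lemma L2_inner_diff_self_le:
  assumes u: "square_integrable M u" and w: "square_integrable M w"
  shows "L2_inner M (\<lambda>z. u z - w z) (\<lambda>z. u z - w z) \<le> 2 * L2_inner M u u + 2 * L2_inner M w w"
proof -
  have "L2_inner M (\<lambda>z. u z - w z) (\<lambda>z. u z - w z) = L2_inner M u u - 2 * L2_inner M u w + L2_inner M w w"
    using L2_inner_diff_left[OF square_integrable_diff[OF u w] u w]
      L2_inner_diff_right[OF u u w] L2_inner_diff_right[OF w u w] L2_inner_commute[of M w u]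
    by simp
  then show ?thesis
    using L2_inner_abs_le[OF u w] by (simp add: abs_le_iff)
qed

lemma L2_inner_sum_self_le:
  assumes K: "finite K" and g: "\<And>k. k \<in> K \<Longrightarrow> square_integrable M (g k)"
    and B: "\<And>k. k \<in> K \<Longrightarrow> L2_inner M (g k) (g k) \<le> B" and c: "\<And>k. k \<in> K \<Longrightarrow> 0 \<le> c k"
  shows "L2_inner M (\<lambda>z. \<Sum>k\<in>K. c k * g k z) (\<lambda>z. \<Sum>k\<in>K. c k * g k z) \<le> (\<Sum>k\<in>K. c k)\<^sup>2 * B"
proof -
  have cg: "\<And>k. k \<in> K \<Longrightarrow> square_integrable M (\<lambda>z. c k * g k z)"
    using g square_integrable_cmult by blast
  have "L2_inner M (\<lambda>z. \<Sum>k\<in>K. c k * g k z) (\<lambda>z. \<Sum>k\<in>K. c k * g k z)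
      = (\<Sum>j\<in>K. \<Sum>k\<in>K. c j * c k * L2_inner M (g j) (g k))"
    using L2_inner_sum_left[OF K square_integrable_sum[OF K cg] cg] L2_inner_sum_right[OF K cg cg]
    by (simp add: L2_inner_cmult_left L2_inner_cmult_right mult.assoc)
  also have "\<dots> \<le> (\<Sum>j\<in>K. \<Sum>k\<in>K. c j * c k * B)"
  proof (intro sum_mono mult_left_mono)
    fix j k assume "j \<in> K" "k \<in> K"
    then show "L2_inner M (g j) (g k) \<le> B" "0 \<le> c j * c k"
      using L2_inner_abs_le[OF g g, of j k] B[of j] B[of k] c[of j] c[of k] by (auto simp: abs_le_iff)
  qed
  also have "\<dots> = (\<Sum>k\<in>K. c k)\<^sup>2 * B"
    by (simp add: power2_eq_square sum_distrib_left sum_distrib_right mult.assoc mult.left_commute)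
  finally show ?thesis .
qed

lemma square_integrable_nn_integral_le:
  assumes g: "g \<in> borel_measurable M" and h: "square_integrable M h"
    and le: "(\<integral>\<^sup>+z. ennreal ((g z)\<^sup>2) \<partial>M) \<le> (\<integral>\<^sup>+z. ennreal ((h z)\<^sup>2) \<partial>M)"
  shows "square_integrable M g" "L2_inner M g g \<le> L2_inner M h h"
proof -
  have h2: "integrable M (\<lambda>z. (h z)\<^sup>2)" using h by (simp add: square_integrable_def)
  then have "(\<integral>\<^sup>+z. ennreal ((g z)\<^sup>2) \<partial>M) < \<infinity>"
    using le by (auto simp: integrable_iff_bounded)
  then have g2: "integrable M (\<lambda>z. (g z)\<^sup>2)"
    using g by (intro integrableI_nonneg) auto
  then show "square_integrable M g" using g by (simp add: square_integrable_def)
  have "ennreal (L2_inner M g g) \<le> ennreal (L2_inner M h h)"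
    using le g2 h2 by (simp add: L2_inner_def nn_integral_eq_integral power2_eq_square)
  then show "L2_inner M g g \<le> L2_inner M h h"
    by (simp add: L2_inner_def)
qed

text \<open>Jensen's inequality for the probability measure \<open>M + p \<delta>\<^sub>a + q \<delta>\<^sub>b\<close>.\<close>
lemma (in finite_measure) square_integral_plus_atoms_le:
  assumes h: "integrable M h" "integrable M (\<lambda>y. (h y)\<^sup>2)"
    and pq: "0 \<le> p" "0 \<le> q" "measure M (space M) + p + q = 1"
  shows "((\<integral>y. h y \<partial>M) + p * a + q * b)\<^sup>2 \<le> (\<integral>y. (h y)\<^sup>2 \<partial>M) + p * a\<^sup>2 + q * b\<^sup>2"
proof -
  define m where "m = (\<integral>y. h y \<partial>M) + p * a + q * b"
  have "(\<integral>y. (h y - m)\<^sup>2 \<partial>M) = (\<integral>y. (h y)\<^sup>2 - 2 * m * h y + m\<^sup>2 \<partial>M)"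
    by (simp add: power2_eq_square algebra_simps)
  also have "\<dots> = (\<integral>y. (h y)\<^sup>2 \<partial>M) - 2 * m * (\<integral>y. h y \<partial>M) + m\<^sup>2 * (1 - p - q)"
    using h pq by simp
  finally have "(\<integral>y. (h y - m)\<^sup>2 \<partial>M) + p * (a - m)\<^sup>2 + q * (b - m)\<^sup>2
      = (\<integral>y. (h y)\<^sup>2 \<partial>M) + p * a\<^sup>2 + q * b\<^sup>2 - m\<^sup>2"
    by (simp add: m_def power2_eq_square algebra_simps)
  moreover have "0 \<le> (\<integral>y. (h y - m)\<^sup>2 \<partial>M) + p * (a - m)\<^sup>2 + q * (b - m)\<^sup>2"
    using pq by simp
  ultimately show ?thesis unfolding m_def by linarith
qed

section \<open>The joint measure of an initial measure and a kernel\<close>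

definition kernel_joint :: "'a measure \<Rightarrow> ('a \<Rightarrow> 'b measure) \<Rightarrow> 'b measure \<Rightarrow> ('a \<times> 'b) measure" where
  "kernel_joint M K N = M \<bind> (\<lambda>x. distr (K x) (M \<Otimes>\<^sub>M N) (Pair x))"

lemma (in subprob_space) nn_integral_const_le: "(\<integral>\<^sup>+y. c \<partial>M) \<le> c"
  using emeasure_space_le_1 by (simp add: mult_left_le)

context
  fixes M :: "'a measure" and N :: "'b measure" and K :: "'a \<Rightarrow> 'b measure"
  assumes M: "subprob_space M" and K: "K \<in> M \<rightarrow>\<^sub>M subprob_algebra N"
begin

lemma measurable_kernel_Pair: "(\<lambda>x. distr (K x) (M \<Otimes>\<^sub>M N) (Pair x)) \<in> M \<rightarrow>\<^sub>M subprob_algebra (M \<Otimes>\<^sub>M N)"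
proof (rule measurable_distr2[OF _ K])
  have "case_prod Pair = (\<lambda>z::'a \<times> 'b. z)" by auto
  then show "case_prod Pair \<in> M \<Otimes>\<^sub>M N \<rightarrow>\<^sub>M M \<Otimes>\<^sub>M N" by simp
qed

lemma sets_kernel_joint: "sets (kernel_joint M K N) = sets (M \<Otimes>\<^sub>M N)"
  unfolding kernel_joint_def using subprob_space.subprob_not_empty[OF M] by simp

lemma subprob_space_kernel_joint: "subprob_space (kernel_joint M K N)"
  unfolding kernel_joint_def by (rule subprob_space_bind[OF M measurable_kernel_Pair])

lemma nn_integral_kernel_joint:
  assumes F: "F \<in> borel_measurable (M \<Otimes>\<^sub>M N)"
  shows "(\<integral>\<^sup>+z. F z \<partial>kernel_joint M K N) = (\<integral>\<^sup>+x. \<integral>\<^sup>+y. F (x, y) \<partial>K x \<partial>M)"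
  unfolding kernel_joint_def
proof (subst nn_integral_bind[OF F measurable_kernel_Pair], rule nn_integral_cong)
  fix x assume x: "x \<in> space M"
  then have "Pair x \<in> K x \<rightarrow>\<^sub>M M \<Otimes>\<^sub>M N"
    using subprob_measurableD(2)[OF K x] by (simp add: measurable_Pair1' cong: measurable_cong_sets)
  then show "(\<integral>\<^sup>+z. F z \<partial>distr (K x) (M \<Otimes>\<^sub>M N) (Pair x)) = (\<integral>\<^sup>+y. F (x, y) \<partial>K x)"
    using F by (simp add: nn_integral_distr)
qed

lemma emeasure_kernel_joint_Times:
  assumes A: "A \<in> sets M" and B: "B \<in> sets N"
  shows "emeasure (kernel_joint M K N) (A \<times> B) = (\<integral>\<^sup>+x. indicator A x * emeasure (K x) B \<partial>M)"
proof -
  have "emeasure (kernel_joint M K N) (A \<times> B) = (\<integral>\<^sup>+x. \<integral>\<^sup>+y. indicator (A \<times> B) (x, y) \<partial>K x \<partial>M)"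
    using A B by (simp add: nn_integral_kernel_joint[symmetric] sets_kernel_joint)
  also have "\<dots> = (\<integral>\<^sup>+x. indicator A x * emeasure (K x) B \<partial>M)"
    using B by (intro nn_integral_cong)
      (simp add: indicator_times nn_integral_cmult_indicator sets_kernel[OF K])
  finally show ?thesis .
qed

lemma borel_measurable_integral_kernel:
  fixes F :: "'a \<times> 'b \<Rightarrow> real"
  assumes F: "F \<in> borel_measurable (M \<Otimes>\<^sub>M N)"
  shows "(\<lambda>x. \<integral>y. F (x, y) \<partial>K x) \<in> borel_measurable M"
proof -
  have "(\<lambda>x. integral\<^sup>L (distr (K x) (M \<Otimes>\<^sub>M N) (Pair x)) F) \<in> borel_measurable M"
    by (rule measurable_compose[OF measurable_kernel_Pair integral_measurable_subprob_algebra[OF F]])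
  moreover have "integral\<^sup>L (distr (K x) (M \<Otimes>\<^sub>M N) (Pair x)) F = (\<integral>y. F (x, y) \<partial>K x)"
    if x: "x \<in> space M" for x
  proof -
    have "Pair x \<in> K x \<rightarrow>\<^sub>M M \<Otimes>\<^sub>M N"
      using subprob_measurableD(2)[OF K x] x by (simp add: measurable_Pair1' cong: measurable_cong_sets)
    then show ?thesis using F by (simp add: integral_distr)
  qed
  ultimately show ?thesis by (simp cong: measurable_cong)
qed

lemma AE_integrable_kernel_section:
  fixes F :: "'a \<times> 'b \<Rightarrow> real"
  assumes F: "integrable (kernel_joint M K N) F"
  shows "AE x in M. integrable (K x) (\<lambda>y. F (x, y))"
proof -
  have Fm: "F \<in> borel_measurable (M \<Otimes>\<^sub>M N)"
    using borel_measurable_integrable[OF F] by (simp add: sets_kernel_joint cong: measurable_cong_sets)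
  from integrableD(2)[OF integrable_norm[OF F]] have "(\<integral>\<^sup>+x. \<integral>\<^sup>+y. norm (F (x, y)) \<partial>K x \<partial>M) \<noteq> \<infinity>"
    using Fm by (simp add: nn_integral_kernel_joint)
  from nn_integral_PInf_AE[OF _ this] show ?thesis
  proof (rule AE_mp[OF _ AE_I2], safe)
    show "(\<lambda>x. \<integral>\<^sup>+y. norm (F (x, y)) \<partial>K x) \<in> borel_measurable M"
      using Fm by (intro nn_integral_measurable_subprob_algebra2[OF _ K]) simp
    fix x assume x: "x \<in> space M" and fin: "(\<integral>\<^sup>+y. norm (F (x, y)) \<partial>K x) \<noteq> \<infinity>"
    have "(\<lambda>y. F (x, y)) \<in> borel_measurable (K x)"
      using measurable_Pair2[OF Fm x] by (simp add: sets_kernel[OF K x] cong: measurable_cong_sets)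
    then show "integrable (K x) (\<lambda>y. F (x, y))"
      using fin by (simp add: integrable_iff_bounded less_top)
  qed
qed

lemma kernel_joint_Fubini_nonneg:
  fixes G :: "'a \<times> 'b \<Rightarrow> real"
  assumes G: "integrable (kernel_joint M K N) G" and nonneg: "\<And>z. 0 \<le> G z"
  shows "integrable M (\<lambda>x. \<integral>y. G (x, y) \<partial>K x)"
    and "integral\<^sup>L (kernel_joint M K N) G = (\<integral>x. \<integral>y. G (x, y) \<partial>K x \<partial>M)"
proof -
  have Gm: "G \<in> borel_measurable (M \<Otimes>\<^sub>M N)"
    using borel_measurable_integrable[OF G] by (simp add: sets_kernel_joint cong: measurable_cong_sets)
  have inner_m: "(\<lambda>x. \<integral>y. G (x, y) \<partial>K x) \<in> borel_measurable M"
    by (rule borel_measurable_integral_kernel[OF Gm])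
  have "AE x in M. ennreal (\<integral>y. G (x, y) \<partial>K x) = (\<integral>\<^sup>+y. ennreal (G (x, y)) \<partial>K x)"
    using AE_integrable_kernel_section[OF G]
    by eventually_elim (simp add: nn_integral_eq_integral nonneg)
  then have "(\<integral>\<^sup>+x. ennreal (\<integral>y. G (x, y) \<partial>K x) \<partial>M) = (\<integral>\<^sup>+x. \<integral>\<^sup>+y. ennreal (G (x, y)) \<partial>K x \<partial>M)"
    by (rule nn_integral_cong_AE)
  also have "\<dots> = (\<integral>\<^sup>+z. ennreal (G z) \<partial>kernel_joint M K N)"
    using Gm by (simp add: nn_integral_kernel_joint)
  finally have eq: "(\<integral>\<^sup>+x. ennreal (\<integral>y. G (x, y) \<partial>K x) \<partial>M) = (\<integral>\<^sup>+z. ennreal (G z) \<partial>kernel_joint M K N)" .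
  then show "integrable M (\<lambda>x. \<integral>y. G (x, y) \<partial>K x)"
    using G inner_m nonneg by (intro integrableI_nonneg) (auto simp: integrable_iff_bounded less_top)
  show "integral\<^sup>L (kernel_joint M K N) G = (\<integral>x. \<integral>y. G (x, y) \<partial>K x \<partial>M)"
    using eq inner_m Gm nonneg
    by (simp add: integral_eq_nn_integral sets_kernel_joint cong: measurable_cong_sets)
qed

lemma kernel_joint_Fubini:
  fixes F :: "'a \<times> 'b \<Rightarrow> real"
  assumes F: "integrable (kernel_joint M K N) F"
  shows "integrable M (\<lambda>x. \<integral>y. F (x, y) \<partial>K x)"
    and "integral\<^sup>L (kernel_joint M K N) F = (\<integral>x. \<integral>y. F (x, y) \<partial>K x \<partial>M)"
proof -
  define Fp where "Fp z = max (F z) 0" for z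
  define Fn where "Fn z = max (- F z) 0" for z
  have F_eq: "F = (\<lambda>z. Fp z - Fn z)" by (auto simp: fun_eq_iff Fp_def Fn_def max_def)
  have Fp_int: "integrable (kernel_joint M K N) Fp" and Fn_int: "integrable (kernel_joint M K N) Fn"
    unfolding Fp_def Fn_def using F by auto
  have "0 \<le> Fp z" "0 \<le> Fn z" for z by (simp_all add: Fp_def Fn_def)
  note P = kernel_joint_Fubini_nonneg[OF Fp_int this(1)] and N = kernel_joint_Fubini_nonneg[OF Fn_int this(2)]
  have Fm: "F \<in> borel_measurable (M \<Otimes>\<^sub>M N)"
    using borel_measurable_integrable[OF F] by (simp add: sets_kernel_joint cong: measurable_cong_sets)
  have sections: "AE x in M. (\<integral>y. F (x, y) \<partial>K x) = (\<integral>y. Fp (x, y) \<partial>K x) - (\<integral>y. Fn (x, y) \<partial>K x)"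
    using AE_integrable_kernel_section[OF Fp_int] AE_integrable_kernel_section[OF Fn_int]
    by eventually_elim (simp add: F_eq)
  have diff_int: "integrable M (\<lambda>x. (\<integral>y. Fp (x, y) \<partial>K x) - (\<integral>y. Fn (x, y) \<partial>K x))"
    using P(1) N(1) by (rule Bochner_Integration.integrable_diff)
  then show "integrable M (\<lambda>x. \<integral>y. F (x, y) \<partial>K x)"
    by (rule integrable_cong_AE_imp[OF _ borel_measurable_integral_kernel[OF Fm]])
      (use sections in \<open>auto elim: AE_mp\<close>)
  have "(\<integral>x. \<integral>y. F (x, y) \<partial>K x \<partial>M) = (\<integral>x. (\<integral>y. Fp (x, y) \<partial>K x) - (\<integral>y. Fn (x, y) \<partial>K x) \<partial>M)"
    using sections by (rule integral_cong_AE[rotated 2])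
      (use diff_int borel_measurable_integral_kernel[OF Fm] in auto)
  also have "\<dots> = integral\<^sup>L (kernel_joint M K N) Fp - integral\<^sup>L (kernel_joint M K N) Fn"
    using P N by simp
  also have "\<dots> = integral\<^sup>L (kernel_joint M K N) F"
    using Fp_int Fn_int unfolding F_eq by simp
  finally show "integral\<^sup>L (kernel_joint M K N) F = (\<integral>x. \<integral>y. F (x, y) \<partial>K x \<partial>M)" by simp
qed

end

section \<open>Reversible pairs of sub-stochastic kernels\<close>

locale reversible_pair = prob_space \<pi> for \<pi> :: "'a measure" +
  fixes K L :: "'a \<Rightarrow> 'a measure"
  assumes kernel_K: "K \<in> \<pi> \<rightarrow>\<^sub>M subprob_algebra \<pi>" and kernel_L: "L \<in> \<pi> \<rightarrow>\<^sub>M subprob_algebra \<pi>"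
    and reversible: "\<And>A B. A \<in> sets \<pi> \<Longrightarrow> B \<in> sets \<pi> \<Longrightarrow>
      (\<integral>\<^sup>+x. indicator A x * emeasure (K x) B \<partial>\<pi>) = (\<integral>\<^sup>+y. indicator B y * emeasure (L y) A \<partial>\<pi>)"

lemma reversible_pair_sym: "reversible_pair \<pi> K L \<Longrightarrow> reversible_pair \<pi> L K"
  unfolding reversible_pair_def reversible_pair_axioms_def by metis

context reversible_pair
begin

lemma swap_measurable_kernel_joint:
  "K' \<in> \<pi> \<rightarrow>\<^sub>M subprob_algebra \<pi> \<Longrightarrow> (\<lambda>(x, y). (y, x)) \<in> kernel_joint \<pi> K' \<pi> \<rightarrow>\<^sub>M \<pi> \<Otimes>\<^sub>M \<pi>"
  using sets_kernel_joint[OF subprob_space_axioms] measurable_pair_swap' by (metis measurable_cong_sets)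

lemma kernel_joint_swap:
  "kernel_joint \<pi> K \<pi> = distr (kernel_joint \<pi> L \<pi>) (\<pi> \<Otimes>\<^sub>M \<pi>) (\<lambda>(x, y). (y, x))"
proof (rule measure_eqI_generator_eq[OF Int_stable_pair_measure_generator pair_measure_closed])
  let ?\<Omega> = "space \<pi> \<times> space \<pi>" and ?E = "{a \<times> b |a b. a \<in> sets \<pi> \<and> b \<in> sets \<pi>}"
  show "sets (kernel_joint \<pi> K \<pi>) = sigma_sets ?\<Omega> ?E"
    using sets_kernel_joint[OF subprob_space_axioms kernel_K] by (simp add: sets_pair_measure)
  show "sets (distr (kernel_joint \<pi> L \<pi>) (\<pi> \<Otimes>\<^sub>M \<pi>) (\<lambda>(x, y). (y, x))) = sigma_sets ?\<Omega> ?E"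
    by (simp add: sets_pair_measure)
  show "range (\<lambda>i. ?\<Omega>) \<subseteq> ?E" "(\<Union>i. ?\<Omega>) = ?\<Omega>" by auto
  show "emeasure (kernel_joint \<pi> K \<pi>) ?\<Omega> \<noteq> \<infinity>" for i :: nat
    using subprob_space.emeasure_subprob_space_less_top[OF subprob_space_kernel_joint[OF subprob_space_axioms kernel_K]]
    by simp
  fix X assume "X \<in> ?E"
  then obtain a b where X: "X = a \<times> b" and a: "a \<in> sets \<pi>" and b: "b \<in> sets \<pi>" by auto
  have "(\<lambda>(x, y). (y, x)) -` (a \<times> b) \<inter> space (kernel_joint \<pi> L \<pi>) = b \<times> a"
    using sets.sets_into_space[OF a] sets.sets_into_space[OF b]
    by (auto simp: space_pair_measure sets_eq_imp_space_eq[OF sets_kernel_joint[OF subprob_space_axioms kernel_L]])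
  then have "emeasure (distr (kernel_joint \<pi> L \<pi>) (\<pi> \<Otimes>\<^sub>M \<pi>) (\<lambda>(x, y). (y, x))) (a \<times> b)
      = emeasure (kernel_joint \<pi> L \<pi>) (b \<times> a)"
    using a b by (simp add: emeasure_distr swap_measurable_kernel_joint[OF kernel_L])
  then show "emeasure (kernel_joint \<pi> K \<pi>) X = emeasure (distr (kernel_joint \<pi> L \<pi>) (\<pi> \<Otimes>\<^sub>M \<pi>) (\<lambda>(x, y). (y, x))) X"
    using a b X reversible[OF a b]
    by (simp add: emeasure_kernel_joint_Times[OF subprob_space_axioms kernel_K]
        emeasure_kernel_joint_Times[OF subprob_space_axioms kernel_L])
qed

lemma nn_integral_reversible:
  assumes F: "F \<in> borel_measurable (\<pi> \<Otimes>\<^sub>M \<pi>)"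
  shows "(\<integral>\<^sup>+x. \<integral>\<^sup>+y. F (x, y) \<partial>K x \<partial>\<pi>) = (\<integral>\<^sup>+y. \<integral>\<^sup>+x. F (x, y) \<partial>L y \<partial>\<pi>)"
proof -
  have "(\<integral>\<^sup>+x. \<integral>\<^sup>+y. F (x, y) \<partial>K x \<partial>\<pi>) = (\<integral>\<^sup>+z. F z \<partial>kernel_joint \<pi> K \<pi>)"
    using F by (simp add: nn_integral_kernel_joint[OF subprob_space_axioms kernel_K])
  also have "\<dots> = (\<integral>\<^sup>+z. F (snd z, fst z) \<partial>kernel_joint \<pi> L \<pi>)"
    unfolding kernel_joint_swap using F
    by (subst nn_integral_distr[OF swap_measurable_kernel_joint[OF kernel_L]]) (auto simp: case_prod_beta)
  also have "\<dots> = (\<integral>\<^sup>+y. \<integral>\<^sup>+x. F (x, y) \<partial>L y \<partial>\<pi>)"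
    using F by (simp add: nn_integral_kernel_joint[OF subprob_space_axioms kernel_L])
  finally show ?thesis .
qed

lemma integral_reversible:
  fixes F :: "'a \<times> 'a \<Rightarrow> real"
  assumes F: "integrable (kernel_joint \<pi> K \<pi>) F"
  shows "(\<integral>x. \<integral>y. F (x, y) \<partial>K x \<partial>\<pi>) = (\<integral>y. \<integral>x. F (x, y) \<partial>L y \<partial>\<pi>)"
proof -
  have Fm: "F \<in> borel_measurable (\<pi> \<Otimes>\<^sub>M \<pi>)"
    using borel_measurable_integrable[OF F]
    by (simp add: sets_kernel_joint[OF subprob_space_axioms kernel_K] cong: measurable_cong_sets)
  have F_swap: "integrable (kernel_joint \<pi> L \<pi>) (\<lambda>z. F (snd z, fst z))"
    using F unfolding kernel_joint_swap
    by (subst (asm) integrable_distr_eq[OF swap_measurable_kernel_joint[OF kernel_L] Fm])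
      (simp add: case_prod_beta)
  have "(\<integral>x. \<integral>y. F (x, y) \<partial>K x \<partial>\<pi>) = integral\<^sup>L (kernel_joint \<pi> K \<pi>) F"
    using kernel_joint_Fubini(2)[OF subprob_space_axioms kernel_K F] by simp
  also have "\<dots> = (\<integral>z. F (snd z, fst z) \<partial>kernel_joint \<pi> L \<pi>)"
    unfolding kernel_joint_swap
    by (subst integral_distr[OF swap_measurable_kernel_joint[OF kernel_L] Fm]) (simp add: case_prod_beta)
  also have "\<dots> = (\<integral>y. \<integral>x. F (x, y) \<partial>L y \<partial>\<pi>)"
    using kernel_joint_Fubini(2)[OF subprob_space_axioms kernel_L F_swap] by simp
  finally show ?thesis .
qed

lemma nn_integral_kernel_reversible_mass:
  assumes g: "g \<in> borel_measurable \<pi>"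
  shows "(\<integral>\<^sup>+x. \<integral>\<^sup>+y. g y \<partial>K x \<partial>\<pi>) = (\<integral>\<^sup>+y. g y * emeasure (L y) (space \<pi>) \<partial>\<pi>)"
proof -
  have "(\<integral>\<^sup>+x. \<integral>\<^sup>+y. g y \<partial>K x \<partial>\<pi>) = (\<integral>\<^sup>+y. \<integral>\<^sup>+x. g y \<partial>L y \<partial>\<pi>)"
    using nn_integral_reversible[of "\<lambda>z. g (snd z)"] g by simp
  also have "\<dots> = (\<integral>\<^sup>+y. g y * emeasure (L y) (space \<pi>) \<partial>\<pi>)"
    by (intro nn_integral_cong) (simp add: subprob_measurableD(1)[OF kernel_L])
  finally show ?thesis .
qed

lemma nn_integral_kernel_le:
  assumes g: "g \<in> borel_measurable \<pi>"
  shows "(\<integral>\<^sup>+x. \<integral>\<^sup>+y. g y \<partial>K x \<partial>\<pi>) \<le> (\<integral>\<^sup>+y. g y \<partial>\<pi>)"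
  unfolding nn_integral_kernel_reversible_mass[OF g]
  using subprob_space.emeasure_space_le_1[OF subprob_space_kernel[OF kernel_L]]
  by (intro nn_integral_mono) (simp add: subprob_measurableD(1)[OF kernel_L] mult_left_le)

lemma AE_square_integrable_kernel:
  assumes g: "square_integrable \<pi> g"
  shows "AE x in \<pi>. square_integrable (K x) g"
proof -
  have gm: "g \<in> borel_measurable \<pi>" using g by (rule square_integrable_borel_measurable)
  have "(\<integral>\<^sup>+x. \<integral>\<^sup>+y. ennreal ((g y)\<^sup>2) \<partial>K x \<partial>\<pi>) \<noteq> \<infinity>"
    using nn_integral_kernel_le[of "\<lambda>y. ennreal ((g y)\<^sup>2)"] gm g
    by (auto simp: square_integrable_def integrable_iff_bounded top_unique)
  from nn_integral_PInf_AE[OF _ this] show ?thesis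
  proof (rule AE_mp[OF _ AE_I2], safe)
    show "(\<lambda>x. \<integral>\<^sup>+y. ennreal ((g y)\<^sup>2) \<partial>K x) \<in> borel_measurable \<pi>"
      using gm by (intro nn_integral_measurable_subprob_algebra2[OF _ kernel_K]) simp
    fix x assume x: "x \<in> space \<pi>" and fin: "(\<integral>\<^sup>+y. ennreal ((g y)\<^sup>2) \<partial>K x) \<noteq> \<infinity>"
    have "g \<in> borel_measurable (K x)"
      using gm by (simp add: sets_kernel[OF kernel_K x] cong: measurable_cong_sets)
    then show "square_integrable (K x) g"
      using fin by (auto simp: square_integrable_def less_top intro!: integrableI_nonneg)
  qed
qed

lemma integrable_kernel_joint_mult:
  assumes u: "square_integrable \<pi> u" and g: "square_integrable \<pi> g"
  shows "integrable (kernel_joint \<pi> K \<pi>) (\<lambda>z. u (fst z) * g (snd z))"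
proof -
  have um: "u \<in> borel_measurable \<pi>" and gm: "g \<in> borel_measurable \<pi>"
    using u g by (simp_all add: square_integrable_def)
  have "(\<integral>\<^sup>+z. norm (u (fst z) * g (snd z)) \<partial>kernel_joint \<pi> K \<pi>)
      \<le> (\<integral>\<^sup>+z. ennreal ((u (fst z))\<^sup>2) + ennreal ((g (snd z))\<^sup>2) \<partial>kernel_joint \<pi> K \<pi>)"
  proof (rule nn_integral_mono)
    fix z
    have "\<bar>u (fst z) * g (snd z)\<bar> \<le> (u (fst z))\<^sup>2 + (g (snd z))\<^sup>2"
      using abs_mult_le_half_sum_squares[of "u (fst z)" "g (snd z)"]
        zero_le_power2[of "u (fst z)"] zero_le_power2[of "g (snd z)"] by argo
    then show "ennreal (norm (u (fst z) * g (snd z))) \<le> ennreal ((u (fst z))\<^sup>2) + ennreal ((g (snd z))\<^sup>2)"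
      by (simp add: ennreal_plus[symmetric] del: ennreal_plus)
  qed
  also have "\<dots> = (\<integral>\<^sup>+z. ennreal ((u (fst z))\<^sup>2) \<partial>kernel_joint \<pi> K \<pi>)
      + (\<integral>\<^sup>+z. ennreal ((g (snd z))\<^sup>2) \<partial>kernel_joint \<pi> K \<pi>)"
    using um gm by (intro nn_integral_add)
      (simp_all add: sets_kernel_joint[OF subprob_space_axioms kernel_K] cong: measurable_cong_sets)
  also have "\<dots> = (\<integral>\<^sup>+x. \<integral>\<^sup>+y. ennreal ((u x)\<^sup>2) \<partial>K x \<partial>\<pi>) + (\<integral>\<^sup>+x. \<integral>\<^sup>+y. ennreal ((g y)\<^sup>2) \<partial>K x \<partial>\<pi>)"
    using nn_integral_kernel_joint[OF subprob_space_axioms kernel_K, of "\<lambda>z. ennreal ((u (fst z))\<^sup>2)"]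
      nn_integral_kernel_joint[OF subprob_space_axioms kernel_K, of "\<lambda>z. ennreal ((g (snd z))\<^sup>2)"] um gm
    by simp
  also have "\<dots> \<le> (\<integral>\<^sup>+x. ennreal ((u x)\<^sup>2) \<partial>\<pi>) + (\<integral>\<^sup>+x. ennreal ((g x)\<^sup>2) \<partial>\<pi>)"
  proof (rule add_mono)
    show "(\<integral>\<^sup>+x. \<integral>\<^sup>+y. ennreal ((u x)\<^sup>2) \<partial>K x \<partial>\<pi>) \<le> (\<integral>\<^sup>+x. ennreal ((u x)\<^sup>2) \<partial>\<pi>)"
      by (intro nn_integral_mono subprob_space.nn_integral_const_le subprob_space_kernel[OF kernel_K])
    show "(\<integral>\<^sup>+x. \<integral>\<^sup>+y. ennreal ((g y)\<^sup>2) \<partial>K x \<partial>\<pi>) \<le> (\<integral>\<^sup>+x. ennreal ((g x)\<^sup>2) \<partial>\<pi>)"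
      using gm by (intro nn_integral_kernel_le) simp
  qed
  also have "\<dots> < \<infinity>"
    using u g by (simp add: square_integrable_def integrable_iff_bounded)
  finally show ?thesis
    using um gm by (auto simp: integrable_iff_bounded sets_kernel_joint[OF subprob_space_axioms kernel_K]
        cong: measurable_cong_sets)
qed

lemma integral_mult_kernel_reversible:
  assumes u: "square_integrable \<pi> u" and g: "square_integrable \<pi> g"
  shows "integrable \<pi> (\<lambda>x. u x * (\<integral>y. g y \<partial>K x))"
    and "(\<integral>x. u x * (\<integral>y. g y \<partial>K x) \<partial>\<pi>) = (\<integral>y. g y * (\<integral>x. u x \<partial>L y) \<partial>\<pi>)"
proof -
  note I = integrable_kernel_joint_mult[OF u g]
  show "integrable \<pi> (\<lambda>x. u x * (\<integral>y. g y \<partial>K x))"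
    using kernel_joint_Fubini(1)[OF subprob_space_axioms kernel_K I] by simp
  show "(\<integral>x. u x * (\<integral>y. g y \<partial>K x) \<partial>\<pi>) = (\<integral>y. g y * (\<integral>x. u x \<partial>L y) \<partial>\<pi>)"
    using integral_reversible[OF I] by (simp add: mult.commute)
qed

end

section \<open>The lifted state space\<close>

definition flip_velocity :: "('a \<times> int \<Rightarrow> real) \<Rightarrow> 'a \<times> int \<Rightarrow> real" where
  "flip_velocity g z = g (fst z, - snd z)"

lemma flip_velocity_apply [simp]: "flip_velocity g (x, v) = g (x, - v)"
  by (simp add: flip_velocity_def)

lemma flip_velocity_flip_velocity [simp]: "flip_velocity (flip_velocity g) = g"
  by (simp add: flip_velocity_def fun_eq_iff)

lemma prob_space_velocity: "prob_space (uniform_count_measure {-1, 1::int})"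
  by (rule prob_space_uniform_count_measure) auto

locale lifted_space = prob_space \<pi> for \<pi> :: "'a measure"
begin

abbreviation \<mu> :: "('a \<times> int) measure" where "\<mu> \<equiv> lift_measure \<pi>"

sublocale velocity: pair_sigma_finite \<pi> "uniform_count_measure {-1, 1::int}"
  by (intro pair_sigma_finite.intro prob_space_imp_sigma_finite prob_space_velocity prob_space_axioms)

lemma prob_space_lift_measure: "prob_space \<mu>"
  unfolding lift_measure_def by (rule prob_space_pair[OF prob_space_axioms prob_space_velocity])

lemma space_lift_measure: "space \<mu> = space \<pi> \<times> {-1, 1}"
  by (simp add: lift_measure_def space_pair_measure space_uniform_count_measure)

lemma borel_measurable_lift_measure_slice:
  assumes "g \<in> borel_measurable \<mu>" "v \<in> {-1, 1}"
  shows "(\<lambda>x. g (x, v)) \<in> borel_measurable \<pi>"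
proof -
  have "(\<lambda>x. (x, v)) \<in> \<pi> \<rightarrow>\<^sub>M \<mu>"
    using assms(2) unfolding lift_measure_def by (auto simp: space_uniform_count_measure)
  from measurable_compose[OF this assms(1)] show ?thesis .
qed

lemma borel_measurable_lift_measure_iff:
  "g \<in> borel_measurable \<mu> \<longleftrightarrow> (\<lambda>x. g (x, 1)) \<in> borel_measurable \<pi> \<and> (\<lambda>x. g (x, -1)) \<in> borel_measurable \<pi>"
proof (intro iffI conjI; (elim conjE)?)
  assume "(\<lambda>x. g (x, 1)) \<in> borel_measurable \<pi>" "(\<lambda>x. g (x, -1)) \<in> borel_measurable \<pi>"
  then have "(\<lambda>z. if snd z = 1 then g (fst z, 1) else g (fst z, -1)) \<in> borel_measurable \<mu>"
    unfolding lift_measure_def by measurable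
  moreover have "z \<in> space \<mu> \<Longrightarrow> (if snd z = 1 then g (fst z, 1) else g (fst z, -1)) = g z" for z
    by (auto simp: space_lift_measure)
  ultimately show "g \<in> borel_measurable \<mu>" by (simp cong: measurable_cong)
qed (auto intro: borel_measurable_lift_measure_slice)

lemma nn_integral_lift_measure:
  assumes F: "F \<in> borel_measurable \<mu>"
  shows "(\<integral>\<^sup>+z. F z \<partial>\<mu>) = ((\<integral>\<^sup>+x. F (x, 1) \<partial>\<pi>) + (\<integral>\<^sup>+x. F (x, -1) \<partial>\<pi>)) / 2"
proof -
  have F1: "(\<lambda>x. F (x, 1)) \<in> borel_measurable \<pi>" and F2: "(\<lambda>x. F (x, -1)) \<in> borel_measurable \<pi>"
    using F by (auto intro: borel_measurable_lift_measure_slice)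
  have "(\<integral>\<^sup>+z. F z \<partial>\<mu>) = (\<integral>\<^sup>+x. (F (x, 1) + F (x, -1)) * inverse 2 \<partial>\<pi>)"
    using F velocity.M2.nn_integral_fst[of F]
    by (simp add: lift_measure_def uniform_count_measure_def nn_integral_point_measure_finite
        divide_ennreal_def algebra_simps)
  also have "\<dots> = ((\<integral>\<^sup>+x. F (x, 1) \<partial>\<pi>) + (\<integral>\<^sup>+x. F (x, -1) \<partial>\<pi>)) / 2"
    using F1 F2 by (simp add: nn_integral_multc nn_integral_add divide_ennreal_def)
  finally show ?thesis .
qed

lemma integrable_lift_measure_iff:
  fixes F :: "'a \<times> int \<Rightarrow> real"
  assumes F: "F \<in> borel_measurable \<mu>"
  shows "integrable \<mu> F \<longleftrightarrow> integrable \<pi> (\<lambda>x. F (x, 1)) \<and> integrable \<pi> (\<lambda>x. F (x, -1))"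
proof -
  have "(\<lambda>z. ennreal (norm (F z))) \<in> borel_measurable \<mu>" using F by measurable
  from nn_integral_lift_measure[OF this] show ?thesis
    using F borel_measurable_lift_measure_iff[of F]
    by (simp add: integrable_iff_bounded ennreal_divide_eq_top_iff less_top[symmetric])
qed

lemma integral_lift_measure:
  fixes F :: "'a \<times> int \<Rightarrow> real"
  assumes F: "integrable \<mu> F"
  shows "(\<integral>z. F z \<partial>\<mu>) = ((\<integral>x. F (x, 1) \<partial>\<pi>) + (\<integral>x. F (x, -1) \<partial>\<pi>)) / 2"
proof -
  have "(\<integral>z. F z \<partial>\<mu>) = (\<integral>x. (F (x, 1) + F (x, -1)) / 2 \<partial>\<pi>)"
    using F velocity.integral_fst'[of F]
    by (simp add: lift_measure_def integral_uniform_count_measure add.commute)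
  also have "\<dots> = ((\<integral>x. F (x, 1) \<partial>\<pi>) + (\<integral>x. F (x, -1) \<partial>\<pi>)) / 2"
    using F integrable_lift_measure_iff[of F] by simp
  finally show ?thesis .
qed

lemma AE_lift_measure_iff: "(AE z in \<mu>. P z) \<longleftrightarrow> (AE x in \<pi>. P (x, 1)) \<and> (AE x in \<pi>. P (x, -1))"
proof (intro iffI conjI; (elim conjE)?)
  assume "AE z in \<mu>. P z"
  then have "AE x in \<pi>. AE v in uniform_count_measure {-1, 1}. P (x, v)"
    unfolding lift_measure_def by (rule velocity.AE_pair)
  moreover have "(AE v in uniform_count_measure {-1, 1::int}. Q v) \<longleftrightarrow> Q 1 \<and> Q (-1)" for Q
  proof (subst AE_iff_measurable[OF _ refl])
    have "finite {v \<in> {-1, 1}. \<not> Q v}" by simp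
    then show "(emeasure (uniform_count_measure {-1, 1}) {v \<in> space (uniform_count_measure {-1, 1}). \<not> Q v} = 0)
        \<longleftrightarrow> Q 1 \<and> Q (-1)"
      by (subst emeasure_uniform_count_measure) (auto simp: space_uniform_count_measure)
  qed (auto simp: sets_uniform_count_measure space_uniform_count_measure)
  ultimately show "AE x in \<pi>. P (x, 1)" "AE x in \<pi>. P (x, -1)"
    by (auto elim: AE_mp)
next
  assume "AE x in \<pi>. P (x, 1)" "AE x in \<pi>. P (x, -1)"
  then have "AE x in \<pi>. P (x, 1) \<and> P (x, -1)" by eventually_elim simp
  then obtain N where N: "{x \<in> space \<pi>. \<not> (P (x, 1) \<and> P (x, -1))} \<subseteq> N" "emeasure \<pi> N = 0" "N \<in> sets \<pi>"
    by (rule AE_E)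
  have "N \<times> {-1, 1} \<in> sets \<mu>" and "emeasure \<mu> (N \<times> {-1, 1}) = 0"
    using N by (auto simp: lift_measure_def velocity.M2.emeasure_pair_measure_Times sets_uniform_count_measure)
  moreover have "{z \<in> space \<mu>. \<not> P z} \<subseteq> N \<times> {-1, 1}"
    using N(1) by (force simp: space_lift_measure)
  ultimately show "AE z in \<mu>. P z" by (intro AE_I)
qed

lemma AE_lift_measure_flip: "(AE z in \<mu>. P z) \<Longrightarrow> AE z in \<mu>. P (fst z, - snd z)"
  by (simp add: AE_lift_measure_iff)

lemma square_integrable_lift_measure_iff:
  "square_integrable \<mu> g \<longleftrightarrow> square_integrable \<pi> (\<lambda>x. g (x, 1)) \<and> square_integrable \<pi> (\<lambda>x. g (x, -1))"
proof (cases "g \<in> borel_measurable \<mu>")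
  case True
  then have "(\<lambda>z. (g z)\<^sup>2) \<in> borel_measurable \<mu>" by measurable
  then show ?thesis
    using True borel_measurable_lift_measure_iff[of g] integrable_lift_measure_iff
    by (auto simp: square_integrable_def)
qed (auto simp: square_integrable_def borel_measurable_lift_measure_iff)

lemma square_integrable_centred:
  "square_integrable \<mu> f \<Longrightarrow> square_integrable \<mu> (\<lambda>z. f z - integral\<^sup>L \<mu> f)"
  using prob_space.finite_measure[OF prob_space_lift_measure]
  by (intro square_integrable_diff finite_measure.square_integrable_const)

lemma square_integrable_lift_measure_slice:
  "square_integrable \<mu> g \<Longrightarrow> v \<in> {-1, 1} \<Longrightarrow> square_integrable \<pi> (\<lambda>x. g (x, v))"
  by (auto simp: square_integrable_lift_measure_iff)

lemma L2_inner_lift_measure: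
  "square_integrable \<mu> u \<Longrightarrow> square_integrable \<mu> w \<Longrightarrow> L2_inner \<mu> u w
    = ((\<integral>x. u (x, 1) * w (x, 1) \<partial>\<pi>) + (\<integral>x. u (x, -1) * w (x, -1) \<partial>\<pi>)) / 2"
  unfolding L2_inner_def by (rule integral_lift_measure) (rule integrable_mult_square_integrable)

lemma square_integrable_flip_velocity: "square_integrable \<mu> g \<Longrightarrow> square_integrable \<mu> (flip_velocity g)"
  by (simp add: square_integrable_lift_measure_iff)

lemma L2_inner_flip_velocity:
  assumes "square_integrable \<mu> u" "square_integrable \<mu> w"
  shows "L2_inner \<mu> (flip_velocity u) w = L2_inner \<mu> u (flip_velocity w)"
  using assms by (simp add: L2_inner_lift_measure square_integrable_flip_velocity mult.commute)

lemma L2_inner_flip_velocity_self: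
  "square_integrable \<mu> g \<Longrightarrow> L2_inner \<mu> (flip_velocity g) (flip_velocity g) = L2_inner \<mu> g g"
  using L2_inner_flip_velocity[of g "flip_velocity g"] by (simp add: square_integrable_flip_velocity)

lemma L2_inner_remainder_le:
  assumes a0: "square_integrable \<mu> a0" and a1: "square_integrable \<mu> a1"
    and p0: "square_integrable \<mu> p0" and p1: "square_integrable \<mu> p1"
    and norm_a: "L2_inner \<mu> a0 a0 \<le> A" "L2_inner \<mu> a1 a1 \<le> A"
    and norm_p: "L2_inner \<mu> p0 p0 \<le> B" "L2_inner \<mu> p1 p1 \<le> B"
  shows "L2_inner \<mu> (flip_velocity a0) p1 - L2_inner \<mu> (flip_velocity p0) a1
    - L2_inner \<mu> (\<lambda>z. a1 z - a0 z) (\<lambda>z. p1 z - p0 z) \<le> 3 * (A + B)"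
proof -
  have "\<bar>L2_inner \<mu> (flip_velocity a0) p1\<bar> \<le> (A + B) / 2"
    using L2_inner_abs_le[OF square_integrable_flip_velocity[OF a0] p1] L2_inner_flip_velocity_self[OF a0]
      norm_a norm_p by argo
  moreover have "\<bar>L2_inner \<mu> (flip_velocity p0) a1\<bar> \<le> (A + B) / 2"
    using L2_inner_abs_le[OF square_integrable_flip_velocity[OF p0] a1] L2_inner_flip_velocity_self[OF p0]
      norm_a norm_p by argo
  moreover have "\<bar>L2_inner \<mu> (\<lambda>z. a1 z - a0 z) (\<lambda>z. p1 z - p0 z)\<bar> \<le> 2 * (A + B)"
    using L2_inner_abs_le[OF square_integrable_diff[OF a1 a0] square_integrable_diff[OF p1 p0]]
      L2_inner_diff_self_le[OF a1 a0] L2_inner_diff_self_le[OF p1 p0] norm_a norm_p by argo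
  ultimately show ?thesis by argo
qed

end

section \<open>Lifted kernels\<close>

definition partial_resolvent :: "(('b \<Rightarrow> real) \<Rightarrow> 'b \<Rightarrow> real) \<Rightarrow> real \<Rightarrow> nat \<Rightarrow> ('b \<Rightarrow> real) \<Rightarrow> 'b \<Rightarrow> real" where
  "partial_resolvent P lam N f z = (\<Sum>k<N. lam ^ k * (P ^^ k) f z)"

locale lifted_kernels = lifted_space \<pi> for \<pi> :: "'a measure" +
  fixes T :: "int \<Rightarrow> 'a \<Rightarrow> 'a measure"
  assumes reversible_T: "reversible_pair \<pi> (T 1) (T (-1))"
begin

lemma reversible_pair_T: "v \<in> {-1, 1} \<Longrightarrow> reversible_pair \<pi> (T v) (T (- v))"
  using reversible_T reversible_pair_sym by auto

lemma kernel_T: "v \<in> {-1, 1} \<Longrightarrow> T v \<in> \<pi> \<rightarrow>\<^sub>M subprob_algebra \<pi>"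
  using reversible_pair.kernel_K[OF reversible_pair_T] .

lemma finite_measure_T: "v \<in> {-1, 1} \<Longrightarrow> x \<in> space \<pi> \<Longrightarrow> finite_measure (T v x)"
  using subprob_space_kernel[OF kernel_T] by (auto intro: subprob_space.axioms)

lemma space_T: "v \<in> {-1, 1} \<Longrightarrow> x \<in> space \<pi> \<Longrightarrow> space (T v x) = space \<pi>"
  using subprob_measurableD(1)[OF kernel_T] .

abbreviation accept :: "int \<Rightarrow> 'a \<Rightarrow> real" where
  "accept v x \<equiv> measure (T v x) (space \<pi>)"

lemma accept_le_1: "v \<in> {-1, 1} \<Longrightarrow> x \<in> space \<pi> \<Longrightarrow> accept v x \<le> 1"
  using subprob_space.subprob_measure_le_1[OF subprob_space_kernel[OF kernel_T]] .

lemma emeasure_T_space: "v \<in> {-1, 1} \<Longrightarrow> x \<in> space \<pi> \<Longrightarrow> emeasure (T v x) (space \<pi>) = accept v x"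
  using finite_measure.emeasure_eq_measure[OF finite_measure_T] .

lemma borel_measurable_accept: "v \<in> {-1, 1} \<Longrightarrow> (\<lambda>x. accept v x) \<in> borel_measurable \<pi>"
  by (rule measurable_compose[OF kernel_T measurable_measure_subprob_algebra]) auto

lemma switching_rateD:
  assumes "switching_rate \<pi> T \<rho>" "v \<in> {-1, 1}" "x \<in> space \<pi>"
  shows "0 \<le> \<rho> v x" "\<rho> v x \<le> 1 - accept v x" "\<rho> v x - \<rho> (- v) x = accept (- v) x - accept v x"
  using assms by (auto simp: switching_rate_def)

lemma borel_measurable_switching_rate:
  "switching_rate \<pi> T \<rho> \<Longrightarrow> v \<in> {-1, 1} \<Longrightarrow> \<rho> v \<in> borel_measurable \<pi>"
  by (auto simp: switching_rate_def)

lemma switching_rate_minimal: "switching_rate \<pi> T (\<lambda>v x. max 0 (accept (- v) x - accept v x))"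
  unfolding switching_rate_def
proof (intro conjI ballI)
  fix v :: int assume v: "v \<in> {-1, 1}"
  then have "- v \<in> {-1, 1}" by auto
  then show "(\<lambda>x. max 0 (accept (- v) x - accept v x)) \<in> borel_measurable \<pi>"
    using borel_measurable_accept v by measurable
next
  fix x v assume x: "x \<in> space \<pi>" and v: "v \<in> {-1, 1::int}"
  then have "- v \<in> {-1, 1}" by auto
  then show "max 0 (accept (- v) x - accept v x) \<le> 1 - accept v x"
    using accept_le_1[OF v x] accept_le_1[OF _ x] by simp
qed auto

lemma switching_rate_maximal: "switching_rate \<pi> T (\<lambda>v x. 1 - accept v x)"
  unfolding switching_rate_def
  using borel_measurable_accept accept_le_1 by (auto intro: borel_measurable_diff)

lemma switching_rate_minimal_le:
  "switching_rate \<pi> T \<rho> \<Longrightarrow> v \<in> {-1, 1} \<Longrightarrow> x \<in> space \<pi> \<Longrightarrow>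
    max 0 (accept (- v) x - accept v x) \<le> \<rho> v x"
  using switching_rateD(1,3)[of \<rho> v x] switching_rateD(1)[of \<rho> "- v" x] by auto

definition hold :: "(int \<Rightarrow> 'a \<Rightarrow> real) \<Rightarrow> int \<Rightarrow> 'a \<Rightarrow> real" where
  "hold \<rho> v x = 1 - accept v x - \<rho> v x"

lemma hold_nonneg: "switching_rate \<pi> T \<rho> \<Longrightarrow> v \<in> {-1, 1} \<Longrightarrow> x \<in> space \<pi> \<Longrightarrow> 0 \<le> hold \<rho> v x"
  using switching_rateD(2)[of \<rho> v x] by (simp add: hold_def)

lemma hold_flip: "switching_rate \<pi> T \<rho> \<Longrightarrow> v \<in> {-1, 1} \<Longrightarrow> x \<in> space \<pi> \<Longrightarrow> hold \<rho> (- v) x = hold \<rho> v x"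
  using switching_rateD(3)[of \<rho> v x] by (simp add: hold_def)

lemma abs_switching_rate_le_1:
  "switching_rate \<pi> T \<rho> \<Longrightarrow> v \<in> {-1, 1} \<Longrightarrow> x \<in> space \<pi> \<Longrightarrow> \<bar>\<rho> v x\<bar> \<le> 1"
  using switching_rateD(1,2)[of \<rho> v x] measure_nonneg[of "T v x" "space \<pi>"] by linarith

lemma abs_hold_le_1: "switching_rate \<pi> T \<rho> \<Longrightarrow> v \<in> {-1, 1} \<Longrightarrow> x \<in> space \<pi> \<Longrightarrow> \<bar>hold \<rho> v x\<bar> \<le> 1"
  using hold_nonneg[of \<rho> v x] switching_rateD(1)[of \<rho> v x] measure_nonneg[of "T v x" "space \<pi>"]
  unfolding hold_def by linarith

lemma borel_measurable_hold:
  "switching_rate \<pi> T \<rho> \<Longrightarrow> v \<in> {-1, 1} \<Longrightarrow> hold \<rho> v \<in> borel_measurable \<pi>"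
  unfolding hold_def[abs_def]
  using borel_measurable_accept borel_measurable_switching_rate by measurable

lemma lifted_op_eq:
  "lifted_op \<pi> T \<rho> g (x, v) = (\<integral>y. g (y, v) \<partial>T v x) + hold \<rho> v x * g (x, v) + \<rho> v x * g (x, - v)"
  by (simp add: lifted_op_def hold_def algebra_simps)

lemma borel_measurable_lifted_op:
  assumes \<rho>: "switching_rate \<pi> T \<rho>" and g: "g \<in> borel_measurable \<mu>"
  shows "lifted_op \<pi> T \<rho> g \<in> borel_measurable \<mu>"
proof -
  have "(\<lambda>x. lifted_op \<pi> T \<rho> g (x, v)) \<in> borel_measurable \<pi>" if v: "v \<in> {-1, 1}" for v
  proof -
    have "(\<lambda>x. \<integral>y. g (y, v) \<partial>T v x) \<in> borel_measurable \<pi>"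
      using measurable_compose[OF kernel_T[OF v]
          integral_measurable_subprob_algebra[OF borel_measurable_lift_measure_slice[OF g v]]] .
    moreover have "(\<lambda>x. g (x, v)) \<in> borel_measurable \<pi>" "(\<lambda>x. g (x, - v)) \<in> borel_measurable \<pi>"
      using v by (auto intro: borel_measurable_lift_measure_slice[OF g])
    ultimately show ?thesis
      unfolding lifted_op_eq
      using borel_measurable_hold[OF \<rho> v] borel_measurable_switching_rate[OF \<rho> v]
      by (intro borel_measurable_add borel_measurable_times)
  qed
  then show ?thesis by (simp add: borel_measurable_lift_measure_iff)
qed

lemma AE_square_integrable_T_section:
  "square_integrable \<mu> g \<Longrightarrow> v \<in> {-1, 1} \<Longrightarrow> AE x in \<pi>. square_integrable (T v x) (\<lambda>y. g (y, v))"
  by (intro reversible_pair.AE_square_integrable_kernel[OF reversible_pair_T] square_integrable_lift_measure_slice)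

lemma AE_integrable_T_section:
  assumes "square_integrable \<mu> g" "v \<in> {-1, 1}"
  shows "AE x in \<pi>. integrable (T v x) (\<lambda>y. g (y, v))"
  using AE_square_integrable_T_section[OF assms] AE_space
proof eventually_elim
  case (elim x)
  then show ?case
    using finite_measure.integrable_square_integrable[OF finite_measure_T[OF assms(2)]] by blast
qed

text \<open>The lifted kernel is linear only almost everywhere: the Bochner integral of a
  non-integrable section is \<open>0\<close>.\<close>
lemma lifted_op_diff_AE:
  assumes g: "square_integrable \<mu> g" and h: "square_integrable \<mu> h"
  shows "AE z in \<mu>. lifted_op \<pi> T \<rho> (\<lambda>z. g z - h z) z = lifted_op \<pi> T \<rho> g z - lifted_op \<pi> T \<rho> h z"
proof -
  have "AE x in \<pi>. lifted_op \<pi> T \<rho> (\<lambda>z. g z - h z) (x, v) = lifted_op \<pi> T \<rho> g (x, v) - lifted_op \<pi> T \<rho> h (x, v)"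
    if v: "v \<in> {-1, 1}" for v
    using AE_integrable_T_section[OF g v] AE_integrable_T_section[OF h v]
    by eventually_elim (simp add: lifted_op_eq algebra_simps)
  then show ?thesis by (simp add: AE_lift_measure_iff)
qed

lemma lifted_op_sum_AE:
  assumes K: "finite K" and g: "\<And>k. k \<in> K \<Longrightarrow> square_integrable \<mu> (g k)"
  shows "AE z in \<mu>. lifted_op \<pi> T \<rho> (\<lambda>z. \<Sum>k\<in>K. c k * g k z) z = (\<Sum>k\<in>K. c k * lifted_op \<pi> T \<rho> (g k) z)"
proof -
  have "AE x in \<pi>. lifted_op \<pi> T \<rho> (\<lambda>z. \<Sum>k\<in>K. c k * g k z) (x, v) = (\<Sum>k\<in>K. c k * lifted_op \<pi> T \<rho> (g k) (x, v))"
    if v: "v \<in> {-1, 1}" for v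
  proof -
    have "AE x in \<pi>. \<forall>k\<in>K. integrable (T v x) (\<lambda>y. g k (y, v))"
      using K g AE_integrable_T_section[OF _ v] by (simp add: AE_finite_all)
    then show ?thesis
      by eventually_elim (simp add: lifted_op_eq sum_distrib_left sum.distrib algebra_simps)
  qed
  then show ?thesis by (simp add: AE_lift_measure_iff)
qed

lemma lifted_op_square_le_AE:
  assumes \<rho>: "switching_rate \<pi> T \<rho>" and g: "square_integrable \<mu> g" and v: "v \<in> {-1, 1}"
  shows "AE x in \<pi>. (lifted_op \<pi> T \<rho> g (x, v))\<^sup>2
    \<le> (\<integral>y. (g (y, v))\<^sup>2 \<partial>T v x) + hold \<rho> v x * (g (x, v))\<^sup>2 + \<rho> v x * (g (x, - v))\<^sup>2"
  using AE_square_integrable_T_section[OF g v] AE_space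
proof eventually_elim
  case (elim x)
  then have "integrable (T v x) (\<lambda>y. g (y, v))" "integrable (T v x) (\<lambda>y. (g (y, v))\<^sup>2)"
    using finite_measure.integrable_square_integrable[OF finite_measure_T[OF v elim(2)] elim(1)]
    by (simp_all add: square_integrable_def)
  then show ?case
    unfolding lifted_op_eq
    using finite_measure.square_integral_plus_atoms_le[OF finite_measure_T[OF v elim(2)] _ _
        hold_nonneg[OF \<rho> v elim(2)] switching_rateD(1)[OF \<rho> v elim(2)], of _ "g (x, v)" "g (x, - v)"]
    by (simp add: space_T[OF v elim(2)] hold_def)
qed

lemma nn_integral_lifted_op_square_section_le:
  assumes \<rho>: "switching_rate \<pi> T \<rho>" and g: "square_integrable \<mu> g" and v: "v \<in> {-1, 1}"
  shows "(\<integral>\<^sup>+x. ennreal ((lifted_op \<pi> T \<rho> g (x, v))\<^sup>2) \<partial>\<pi>)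
    \<le> (\<integral>\<^sup>+x. ennreal ((g (x, v))\<^sup>2 * (accept (- v) x + hold \<rho> v x) + \<rho> v x * (g (x, - v))\<^sup>2) \<partial>\<pi>)"
proof -
  have mv: "- v \<in> {-1, 1}" using v by auto
  have gv: "(\<lambda>x. g (x, v)) \<in> borel_measurable \<pi>" and gmv: "(\<lambda>x. g (x, - v)) \<in> borel_measurable \<pi>"
    using square_integrable_borel_measurable[OF square_integrable_lift_measure_slice[OF g]] v mv by auto
  have hold_rate_m: "(\<lambda>x. ennreal (hold \<rho> v x * (g (x, v))\<^sup>2 + \<rho> v x * (g (x, - v))\<^sup>2)) \<in> borel_measurable \<pi>"
    using gv gmv borel_measurable_hold[OF \<rho> v] borel_measurable_switching_rate[OF \<rho> v] by measurable
  have "AE x in \<pi>. ennreal ((lifted_op \<pi> T \<rho> g (x, v))\<^sup>2)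
      \<le> (\<integral>\<^sup>+y. ennreal ((g (y, v))\<^sup>2) \<partial>T v x) + ennreal (hold \<rho> v x * (g (x, v))\<^sup>2 + \<rho> v x * (g (x, - v))\<^sup>2)"
    using lifted_op_square_le_AE[OF \<rho> g v] AE_square_integrable_T_section[OF g v] AE_space
  proof eventually_elim
    case (elim x)
    then show ?case
      using hold_nonneg[OF \<rho> v elim(3)] switching_rateD(1)[OF \<rho> v elim(3)]
      by (simp add: square_integrable_def nn_integral_eq_integral ennreal_plus[symmetric] del: ennreal_plus)
  qed
  then have "(\<integral>\<^sup>+x. ennreal ((lifted_op \<pi> T \<rho> g (x, v))\<^sup>2) \<partial>\<pi>)
      \<le> (\<integral>\<^sup>+x. \<integral>\<^sup>+y. ennreal ((g (y, v))\<^sup>2) \<partial>T v x \<partial>\<pi>)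
        + (\<integral>\<^sup>+x. ennreal (hold \<rho> v x * (g (x, v))\<^sup>2 + \<rho> v x * (g (x, - v))\<^sup>2) \<partial>\<pi>)"
    using gv hold_rate_m
    by (subst nn_integral_add[symmetric])
      (auto intro!: nn_integral_mono_AE nn_integral_measurable_subprob_algebra2[OF _ kernel_T[OF v]])
  also have "(\<integral>\<^sup>+x. \<integral>\<^sup>+y. ennreal ((g (y, v))\<^sup>2) \<partial>T v x \<partial>\<pi>)
      = (\<integral>\<^sup>+x. ennreal ((g (x, v))\<^sup>2 * accept (- v) x) \<partial>\<pi>)"
    using gv by (simp add: reversible_pair.nn_integral_kernel_reversible_mass[OF reversible_pair_T[OF v]]
        emeasure_T_space[OF mv] ennreal_mult'' cong: nn_integral_cong)
  also have "\<dots> + (\<integral>\<^sup>+x. ennreal (hold \<rho> v x * (g (x, v))\<^sup>2 + \<rho> v x * (g (x, - v))\<^sup>2) \<partial>\<pi>)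
      = (\<integral>\<^sup>+x. ennreal ((g (x, v))\<^sup>2 * (accept (- v) x + hold \<rho> v x) + \<rho> v x * (g (x, - v))\<^sup>2) \<partial>\<pi>)"
  proof -
    have "ennreal ((g (x, v))\<^sup>2 * accept (- v) x) + ennreal (hold \<rho> v x * (g (x, v))\<^sup>2 + \<rho> v x * (g (x, - v))\<^sup>2)
        = ennreal ((g (x, v))\<^sup>2 * (accept (- v) x + hold \<rho> v x) + \<rho> v x * (g (x, - v))\<^sup>2)"
      if x: "x \<in> space \<pi>" for x
      using hold_nonneg[OF \<rho> v x] switching_rateD(1)[OF \<rho> v x]
      by (simp add: ennreal_plus[symmetric] distrib_left add.assoc mult.commute del: ennreal_plus)
    moreover have "(\<lambda>x. ennreal ((g (x, v))\<^sup>2 * accept (- v) x)) \<in> borel_measurable \<pi>"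
      using gv borel_measurable_accept[OF mv] by measurable
    ultimately show ?thesis
      using hold_rate_m by (subst nn_integral_add[symmetric]) (auto intro!: nn_integral_cong)
  qed
  finally show ?thesis .
qed

lemma nn_integral_lifted_op_square_le:
  assumes \<rho>: "switching_rate \<pi> T \<rho>" and g: "square_integrable \<mu> g"
  shows "(\<integral>\<^sup>+z. ennreal ((lifted_op \<pi> T \<rho> g z)\<^sup>2) \<partial>\<mu>) \<le> (\<integral>\<^sup>+z. ennreal ((g z)\<^sup>2) \<partial>\<mu>)"
proof -
  define B where "B v x = (g (x, v))\<^sup>2 * (accept (- v) x + hold \<rho> v x) + \<rho> v x * (g (x, - v))\<^sup>2" for v x
  have gm: "g \<in> borel_measurable \<mu>" using g by (rule square_integrable_borel_measurable)
  have B_m: "B v \<in> borel_measurable \<pi>" if "v \<in> {-1, 1}" for v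
  proof -
    have "- v \<in> {-1, 1}" using that by auto
    then show ?thesis
      unfolding B_def[abs_def]
      using that borel_measurable_lift_measure_slice[OF gm] borel_measurable_accept borel_measurable_hold[OF \<rho>]
        borel_measurable_switching_rate[OF \<rho>]
      by measurable
  qed
  have B_sum: "B 1 x + B (-1) x = (g (x, 1))\<^sup>2 + (g (x, -1))\<^sup>2" if x: "x \<in> space \<pi>" for x
  proof -
    have "accept (-1) x + hold \<rho> 1 x + \<rho> (-1) x = 1" "accept 1 x + hold \<rho> (-1) x + \<rho> 1 x = 1"
      using switching_rateD(3)[OF \<rho> _ x, of 1] by (auto simp: hold_def)
    moreover have "B 1 x + B (-1) x = (g (x, 1))\<^sup>2 * (accept (-1) x + hold \<rho> 1 x + \<rho> (-1) x)
        + (g (x, -1))\<^sup>2 * (accept 1 x + hold \<rho> (-1) x + \<rho> 1 x)"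
      by (simp add: B_def algebra_simps)
    ultimately show ?thesis by simp
  qed
  have B_nonneg: "0 \<le> B v x" if "v \<in> {-1, 1}" "x \<in> space \<pi>" for v x
    using that hold_nonneg[OF \<rho>] switching_rateD(1)[OF \<rho>] measure_nonneg[of "T (- v) x" "space \<pi>"]
    by (auto simp: B_def)
  have "(\<integral>\<^sup>+z. ennreal ((lifted_op \<pi> T \<rho> g z)\<^sup>2) \<partial>\<mu>)
      \<le> ((\<integral>\<^sup>+x. ennreal (B 1 x) \<partial>\<pi>) + (\<integral>\<^sup>+x. ennreal (B (-1) x) \<partial>\<pi>)) / 2"
    using borel_measurable_lifted_op[OF \<rho> gm]
      nn_integral_lifted_op_square_section_le[OF \<rho> g, of 1] nn_integral_lifted_op_square_section_le[OF \<rho> g, of "-1"]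
    by (simp add: nn_integral_lift_measure B_def add_mono divide_right_mono_ennreal)
  also have "\<dots> = ((\<integral>\<^sup>+x. ennreal ((g (x, 1))\<^sup>2) \<partial>\<pi>) + (\<integral>\<^sup>+x. ennreal ((g (x, -1))\<^sup>2) \<partial>\<pi>)) / 2"
  proof -
    have "(\<integral>\<^sup>+x. ennreal (B 1 x) \<partial>\<pi>) + (\<integral>\<^sup>+x. ennreal (B (-1) x) \<partial>\<pi>)
        = (\<integral>\<^sup>+x. ennreal ((g (x, 1))\<^sup>2) + ennreal ((g (x, -1))\<^sup>2) \<partial>\<pi>)"
      using B_m B_nonneg B_sum
      by (subst nn_integral_add[symmetric])
        (auto intro!: nn_integral_cong simp: ennreal_plus[symmetric] simp del: ennreal_plus)
    moreover have "(\<lambda>x. g (x, 1)) \<in> borel_measurable \<pi>" "(\<lambda>x. g (x, -1)) \<in> borel_measurable \<pi>"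
      using gm by (simp_all add: borel_measurable_lift_measure_iff)
    ultimately show ?thesis by (simp add: nn_integral_add)
  qed
  also have "\<dots> = (\<integral>\<^sup>+z. ennreal ((g z)\<^sup>2) \<partial>\<mu>)"
    using gm by (simp add: nn_integral_lift_measure)
  finally show ?thesis .
qed

lemma lifted_op_contraction:
  assumes \<rho>: "switching_rate \<pi> T \<rho>" and g: "square_integrable \<mu> g"
  shows "square_integrable \<mu> (lifted_op \<pi> T \<rho> g)"
    and "L2_inner \<mu> (lifted_op \<pi> T \<rho> g) (lifted_op \<pi> T \<rho> g) \<le> L2_inner \<mu> g g"
  using square_integrable_nn_integral_le[OF borel_measurable_lifted_op[OF \<rho> square_integrable_borel_measurable[OF g]]
      g nn_integral_lifted_op_square_le[OF \<rho> g]] by auto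

lemma L2_inner_lifted_op_le:
  assumes \<rho>: "switching_rate \<pi> T \<rho>" and g: "square_integrable \<mu> g"
  shows "L2_inner \<mu> g (lifted_op \<pi> T \<rho> g) \<le> L2_inner \<mu> g g"
  using L2_inner_abs_le[OF g lifted_op_contraction(1)[OF \<rho> g]] lifted_op_contraction(2)[OF \<rho> g]
  by (simp add: abs_le_iff)

lemma integral_mult_lifted_op_section:
  assumes \<rho>: "switching_rate \<pi> T \<rho>" and a: "square_integrable \<pi> a" and g: "square_integrable \<mu> g"
    and v: "v \<in> {-1, 1}"
  shows "(\<integral>x. a x * lifted_op \<pi> T \<rho> g (x, v) \<partial>\<pi>) = (\<integral>x. a x * (\<integral>y. g (y, v) \<partial>T v x) \<partial>\<pi>)
    + (\<integral>x. hold \<rho> v x * a x * g (x, v) \<partial>\<pi>) + (\<integral>x. \<rho> v x * a x * g (x, - v) \<partial>\<pi>)"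
proof -
  have "- v \<in> {-1, 1}" using v by auto
  then have gv: "square_integrable \<pi> (\<lambda>x. g (x, v))" and gmv: "square_integrable \<pi> (\<lambda>x. g (x, - v))"
    using square_integrable_lift_measure_slice[OF g] v by auto
  have "integrable \<pi> (\<lambda>x. a x * (\<integral>y. g (y, v) \<partial>T v x))"
    by (rule reversible_pair.integral_mult_kernel_reversible(1)[OF reversible_pair_T[OF v] a gv])
  moreover have "integrable \<pi> (\<lambda>x. hold \<rho> v x * a x * g (x, v))"
    using square_integrable_bounded_mult[OF a borel_measurable_hold[OF \<rho> v] abs_hold_le_1[OF \<rho> v]]
    by (rule integrable_mult_square_integrable[OF _ gv])
  moreover have "integrable \<pi> (\<lambda>x. \<rho> v x * a x * g (x, - v))"
    using square_integrable_bounded_mult[OF a borel_measurable_switching_rate[OF \<rho> v] abs_switching_rate_le_1[OF \<rho> v]]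
    by (rule integrable_mult_square_integrable[OF _ gmv])
  ultimately show ?thesis
    unfolding lifted_op_eq by (simp add: distrib_left mult.assoc mult.left_commute)
qed

text \<open>Slice by slice, the adjointness defect is due to the switching terms only; they cancel
  in the sum over both velocities.\<close>
lemma integral_lifted_op_section_adjoint:
  assumes \<rho>: "switching_rate \<pi> T \<rho>" and u: "square_integrable \<mu> u" and g: "square_integrable \<mu> g"
    and v: "v \<in> {-1, 1}"
  shows "(\<integral>x. u (x, v) * lifted_op \<pi> T \<rho> g (x, v) \<partial>\<pi>)
      - (\<integral>x. g (x, v) * lifted_op \<pi> T \<rho> (flip_velocity u) (x, - v) \<partial>\<pi>)
    = (\<integral>x. \<rho> v x * u (x, v) * g (x, - v) \<partial>\<pi>) - (\<integral>x. \<rho> (- v) x * u (x, - v) * g (x, v) \<partial>\<pi>)"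
proof -
  have mv: "- v \<in> {-1, 1}" using v by auto
  have uv: "square_integrable \<pi> (\<lambda>x. u (x, v))" and gv: "square_integrable \<pi> (\<lambda>x. g (x, v))"
    using square_integrable_lift_measure_slice u g v by auto
  have kernel_terms: "(\<integral>x. u (x, v) * (\<integral>y. g (y, v) \<partial>T v x) \<partial>\<pi>) = (\<integral>x. g (x, v) * (\<integral>y. u (y, v) \<partial>T (- v) x) \<partial>\<pi>)"
    by (rule reversible_pair.integral_mult_kernel_reversible(2)[OF reversible_pair_T[OF v] uv gv])
  have hold_terms: "(\<integral>x. hold \<rho> v x * u (x, v) * g (x, v) \<partial>\<pi>) = (\<integral>x. hold \<rho> (- v) x * g (x, v) * u (x, v) \<partial>\<pi>)"
    using hold_flip[OF \<rho> v] by (intro Bochner_Integration.integral_cong) simp_all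
  show ?thesis
    using integral_mult_lifted_op_section[OF \<rho> uv g v]
      integral_mult_lifted_op_section[OF \<rho> gv square_integrable_flip_velocity[OF u] mv]
      kernel_terms hold_terms
    by (simp add: mult.commute mult.left_commute)
qed

lemma L2_inner_lifted_op_adjoint:
  assumes \<rho>: "switching_rate \<pi> T \<rho>" and u: "square_integrable \<mu> u" and g: "square_integrable \<mu> g"
  shows "L2_inner \<mu> u (lifted_op \<pi> T \<rho> g) = L2_inner \<mu> (flip_velocity (lifted_op \<pi> T \<rho> (flip_velocity u))) g"
proof -
  have "L2_inner \<mu> u (lifted_op \<pi> T \<rho> g)
      = ((\<integral>x. u (x, 1) * lifted_op \<pi> T \<rho> g (x, 1) \<partial>\<pi>) + (\<integral>x. u (x, -1) * lifted_op \<pi> T \<rho> g (x, -1) \<partial>\<pi>)) / 2"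
    by (rule L2_inner_lift_measure[OF u lifted_op_contraction(1)[OF \<rho> g]])
  moreover have "L2_inner \<mu> (flip_velocity (lifted_op \<pi> T \<rho> (flip_velocity u))) g
      = ((\<integral>x. g (x, 1) * lifted_op \<pi> T \<rho> (flip_velocity u) (x, -1) \<partial>\<pi>)
        + (\<integral>x. g (x, -1) * lifted_op \<pi> T \<rho> (flip_velocity u) (x, 1) \<partial>\<pi>)) / 2"
    using L2_inner_lift_measure[OF square_integrable_flip_velocity[OF
          lifted_op_contraction(1)[OF \<rho> square_integrable_flip_velocity[OF u]]] g]
    by (simp add: mult.commute)
  ultimately show ?thesis
    using integral_lifted_op_section_adjoint[OF \<rho> u g, of 1] integral_lifted_op_section_adjoint[OF \<rho> u g, of "-1"]
    by simp
qed

lemma lifted_op_power_contraction: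
  assumes \<rho>: "switching_rate \<pi> T \<rho>" and g: "square_integrable \<mu> g"
  shows "square_integrable \<mu> ((lifted_op \<pi> T \<rho> ^^ k) g)"
    and "L2_inner \<mu> ((lifted_op \<pi> T \<rho> ^^ k) g) ((lifted_op \<pi> T \<rho> ^^ k) g) \<le> L2_inner \<mu> g g"
proof (induction k)
  case (Suc k)
  { case 1 show ?case using lifted_op_contraction(1)[OF \<rho> Suc.IH(1)] by simp }
  { case 2 show ?case using lifted_op_contraction(2)[OF \<rho> Suc.IH(1)] Suc.IH(2) by simp }
qed (use g in simp_all)

lemma summable_L2_inner_lifted_op_power:
  assumes \<rho>: "switching_rate \<pi> T \<rho>" and f: "square_integrable \<mu> f" and lam: "\<bar>lam\<bar> < 1"
  shows "summable (\<lambda>k. lam ^ k * L2_inner \<mu> f ((lifted_op \<pi> T \<rho> ^^ k) f))"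
proof (rule summable_comparison_test)
  show "summable (\<lambda>k. \<bar>lam\<bar> ^ k * L2_inner \<mu> f f)"
    using lam by (intro summable_mult2 summable_geometric) simp
  have "\<bar>L2_inner \<mu> f ((lifted_op \<pi> T \<rho> ^^ k) f)\<bar> \<le> L2_inner \<mu> f f" for k
    using L2_inner_abs_le[OF f lifted_op_power_contraction(1)[OF \<rho> f, where k=k]]
      lifted_op_power_contraction(2)[OF \<rho> f, where k=k]
    by argo
  then show "\<exists>N. \<forall>k\<ge>N. norm (lam ^ k * L2_inner \<mu> f ((lifted_op \<pi> T \<rho> ^^ k) f)) \<le> \<bar>lam\<bar> ^ k * L2_inner \<mu> f f"
    by (auto simp: abs_mult power_abs intro!: mult_left_mono)
qed

lemma square_integrable_partial_resolvent:
  "switching_rate \<pi> T \<rho> \<Longrightarrow> square_integrable \<mu> f \<Longrightarrow>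
    square_integrable \<mu> (partial_resolvent (lifted_op \<pi> T \<rho>) lam N f)"
  unfolding partial_resolvent_def[abs_def]
  by (intro square_integrable_sum square_integrable_cmult lifted_op_power_contraction) auto

lemma partial_resolvent_equation_AE:
  assumes \<rho>: "switching_rate \<pi> T \<rho>" and f: "square_integrable \<mu> f"
  shows "AE z in \<mu>. partial_resolvent (lifted_op \<pi> T \<rho>) lam N f z
      - lam * lifted_op \<pi> T \<rho> (partial_resolvent (lifted_op \<pi> T \<rho>) lam N f) z
    = f z - lam ^ N * (lifted_op \<pi> T \<rho> ^^ N) f z"
proof -
  let ?P = "lifted_op \<pi> T \<rho>"
  have "AE z in \<mu>. ?P (partial_resolvent ?P lam N f) z = (\<Sum>k<N. lam ^ k * ?P ((?P ^^ k) f) z)"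
    unfolding partial_resolvent_def[abs_def]
    by (rule lifted_op_sum_AE) (auto intro: lifted_op_power_contraction[OF \<rho> f])
  then show ?thesis
  proof eventually_elim
    case (elim z)
    have "partial_resolvent ?P lam N f z - lam * ?P (partial_resolvent ?P lam N f) z
        = - (\<Sum>k<N. lam ^ Suc k * (?P ^^ Suc k) f z - lam ^ k * (?P ^^ k) f z)"
      using elim by (simp add: partial_resolvent_def sum_distrib_left sum_subtractf mult.assoc)
    also have "\<dots> = f z - lam ^ N * (?P ^^ N) f z"
      by (subst sum_lessThan_telescope) simp
    finally show ?case .
  qed
qed

lemma L2_inner_partial_resolvent_le:
  assumes \<rho>: "switching_rate \<pi> T \<rho>" and f: "square_integrable \<mu> f" and lam: "0 \<le> lam" "lam < 1"
  shows "L2_inner \<mu> (partial_resolvent (lifted_op \<pi> T \<rho>) lam N f) (partial_resolvent (lifted_op \<pi> T \<rho>) lam N f)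
    \<le> L2_inner \<mu> f f / (1 - lam)\<^sup>2"
proof -
  have "L2_inner \<mu> (partial_resolvent (lifted_op \<pi> T \<rho>) lam N f) (partial_resolvent (lifted_op \<pi> T \<rho>) lam N f)
      \<le> (\<Sum>k<N. lam ^ k)\<^sup>2 * L2_inner \<mu> f f"
    unfolding partial_resolvent_def[abs_def]
    by (rule L2_inner_sum_self_le) (use lifted_op_power_contraction[OF \<rho> f] lam in auto)
  also have "\<dots> \<le> (1 / (1 - lam))\<^sup>2 * L2_inner \<mu> f f"
  proof (intro mult_right_mono power_mono L2_inner_self_nonneg)
    show "(\<Sum>k<N. lam ^ k) \<le> 1 / (1 - lam)"
      using sum_le_suminf[OF summable_geometric, of lam "{..<N}"] lam by (simp add: suminf_geometric)
  qed (use lam in \<open>auto intro: sum_nonneg\<close>)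
  finally show ?thesis by (simp add: power_divide)
qed

lemma L2_inner_partial_resolvent:
  "switching_rate \<pi> T \<rho> \<Longrightarrow> square_integrable \<mu> f \<Longrightarrow>
    L2_inner \<mu> f (partial_resolvent (lifted_op \<pi> T \<rho>) lam N f)
      = (\<Sum>k<N. lam ^ k * L2_inner \<mu> f ((lifted_op \<pi> T \<rho> ^^ k) f))"
  unfolding partial_resolvent_def[abs_def]
  by (subst L2_inner_sum_right) (auto simp: L2_inner_cmult_right intro!: square_integrable_cmult
      lifted_op_power_contraction)

end

section \<open>Comparison of two switching rates\<close>

locale rate_comparison = lifted_kernels \<pi> T for \<pi> :: "'a measure" and T +
  fixes \<rho>0 \<rho>1 :: "int \<Rightarrow> 'a \<Rightarrow> real"
  assumes rate0: "switching_rate \<pi> T \<rho>0" and rate1: "switching_rate \<pi> T \<rho>1"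
    and rate_le: "\<And>v x. v \<in> {-1, 1} \<Longrightarrow> x \<in> space \<pi> \<Longrightarrow> \<rho>0 v x \<le> \<rho>1 v x"
begin

abbreviation P0 :: "('a \<times> int \<Rightarrow> real) \<Rightarrow> 'a \<times> int \<Rightarrow> real" where "P0 \<equiv> lifted_op \<pi> T \<rho>0"
abbreviation P1 :: "('a \<times> int \<Rightarrow> real) \<Rightarrow> 'a \<times> int \<Rightarrow> real" where "P1 \<equiv> lifted_op \<pi> T \<rho>1"

definition rate_gap :: "'a \<times> int \<Rightarrow> real" where
  "rate_gap z = \<rho>1 (snd z) (fst z) - \<rho>0 (snd z) (fst z)"

definition extra_switching :: "('a \<times> int \<Rightarrow> real) \<Rightarrow> 'a \<times> int \<Rightarrow> real" where
  "extra_switching g z = rate_gap z * (flip_velocity g z - g z)"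

lemma P1_eq_P0_plus_extra_switching: "P1 g z = P0 g z + extra_switching g z"
  by (cases z) (simp add: lifted_op_def extra_switching_def rate_gap_def algebra_simps)

lemma rate_gap_flip: "x \<in> space \<pi> \<Longrightarrow> v \<in> {-1, 1} \<Longrightarrow> rate_gap (x, - v) = rate_gap (x, v)"
  using switching_rateD(3)[OF rate0, of v x] switching_rateD(3)[OF rate1, of v x] by (simp add: rate_gap_def)

lemma rate_gap_nonneg: "x \<in> space \<pi> \<Longrightarrow> v \<in> {-1, 1} \<Longrightarrow> 0 \<le> rate_gap (x, v)"
  using rate_le[of v x] by (simp add: rate_gap_def)

lemma rate_gap_le_1: "x \<in> space \<pi> \<Longrightarrow> v \<in> {-1, 1} \<Longrightarrow> rate_gap (x, v) \<le> 1"
  using abs_switching_rate_le_1[OF rate1, of v x] switching_rateD(1)[OF rate0, of v x]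
  unfolding rate_gap_def by simp

lemma borel_measurable_rate_gap: "rate_gap \<in> borel_measurable \<mu>"
  using borel_measurable_switching_rate[OF rate0] borel_measurable_switching_rate[OF rate1]
  by (simp add: borel_measurable_lift_measure_iff rate_gap_def)

lemma square_integrable_extra_switching: "square_integrable \<mu> g \<Longrightarrow> square_integrable \<mu> (extra_switching g)"
  unfolding extra_switching_def[abs_def] using rate_gap_nonneg rate_gap_le_1
  by (intro square_integrable_bounded_mult[where B=1] square_integrable_diff square_integrable_flip_velocity
      borel_measurable_rate_gap) (auto simp: space_lift_measure)

lemma L2_inner_flip_extra_switching:
  assumes a: "square_integrable \<mu> a" and b: "square_integrable \<mu> b"
  shows "L2_inner \<mu> (flip_velocity a) (extra_switching b) = - L2_inner \<mu> a (extra_switching b)"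
proof -
  have Eb: "square_integrable \<mu> (extra_switching b)" by (rule square_integrable_extra_switching[OF b])
  have "flip_velocity (extra_switching b) z = -1 * extra_switching b z" if "z \<in> space \<mu>" for z
    using that rate_gap_flip by (auto simp: space_lift_measure extra_switching_def right_diff_distrib)
  then have "AE z in \<mu>. flip_velocity (extra_switching b) z = -1 * extra_switching b z"
    by (rule AE_I2)
  then have "L2_inner \<mu> a (flip_velocity (extra_switching b)) = L2_inner \<mu> a (\<lambda>z. -1 * extra_switching b z)"
    by (intro L2_inner_cong_AE a square_integrable_flip_velocity square_integrable_cmult Eb)
  then show ?thesis
    using L2_inner_flip_velocity[OF a Eb] L2_inner_cmult_right[of \<mu> a "-1" "extra_switching b"] by simp
qed

text \<open>Since the flip turns \<open>extra_switching\<close> into its negative,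
  \<open>2 \<langle>a, E a\<rangle> = \<langle>a - Q a, E a\<rangle> = - \<integral> rate_gap (a - Q a)\<^sup>2 d\<mu>\<close>.\<close>
lemma L2_inner_extra_switching_self_nonpos:
  assumes a: "square_integrable \<mu> a"
  shows "L2_inner \<mu> a (extra_switching a) \<le> 0"
proof -
  have Qa: "square_integrable \<mu> (flip_velocity a)" by (rule square_integrable_flip_velocity[OF a])
  have "2 * L2_inner \<mu> a (extra_switching a) = L2_inner \<mu> (\<lambda>z. a z - flip_velocity a z) (extra_switching a)"
    using L2_inner_diff_left[OF square_integrable_extra_switching[OF a] a Qa] L2_inner_flip_extra_switching[OF a a]
    by simp
  also have "\<dots> = (\<integral>z. - (rate_gap z * (a z - flip_velocity a z)\<^sup>2) \<partial>\<mu>)"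
    unfolding L2_inner_def extra_switching_def
    by (rule Bochner_Integration.integral_cong) (simp_all add: power2_eq_square algebra_simps)
  also have "\<dots> \<le> 0"
    using rate_gap_nonneg by (auto intro!: Bochner_Integration.integral_nonneg simp: space_lift_measure)
  finally show ?thesis by simp
qed

lemma resolvent_cross_identity:
  assumes f: "square_integrable \<mu> f" and a0: "square_integrable \<mu> a0" and a1: "square_integrable \<mu> a1"
    and r0: "square_integrable \<mu> r0" and r1: "square_integrable \<mu> r1"
    and f_flip: "AE z in \<mu>. f (fst z, - snd z) = f z"
    and eq0: "AE z in \<mu>. a0 z - lam * P0 a0 z = f z + r0 z"
    and eq1: "AE z in \<mu>. a1 z - lam * P1 a1 z = f z + r1 z"
  shows "L2_inner \<mu> f a1 - L2_inner \<mu> f a0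
    = L2_inner \<mu> (flip_velocity a0) r1 - L2_inner \<mu> (flip_velocity r0) a1 - lam * L2_inner \<mu> a0 (extra_switching a1)"
proof -
  have P0a0: "square_integrable \<mu> (P0 a0)" and P0a1: "square_integrable \<mu> (P0 a1)"
    using lifted_op_contraction(1)[OF rate0] a0 a1 by auto
  have Qa0: "square_integrable \<mu> (flip_velocity a0)" and Qr0: "square_integrable \<mu> (flip_velocity r0)"
    and QP0a0: "square_integrable \<mu> (flip_velocity (P0 a0))"
    using square_integrable_flip_velocity a0 r0 P0a0 by auto
  have Ea1: "square_integrable \<mu> (extra_switching a1)" by (rule square_integrable_extra_switching[OF a1])
  note si = square_integrable_cmult square_integrable_diff square_integrable_add
  \<comment> \<open>pair the flipped equation for \<open>a0\<close> with \<open>a1\<close>, and the equation for \<open>a1\<close> with the flip of \<open>a0\<close>\<close>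
  have "AE z in \<mu>. f z = (\<lambda>z. flip_velocity a0 z - lam * flip_velocity (P0 a0) z) z - flip_velocity r0 z"
    using AE_lift_measure_flip[OF eq0] f_flip by eventually_elim (simp add: flip_velocity_def)
  then have "L2_inner \<mu> a1 f
      = L2_inner \<mu> a1 (flip_velocity a0) - lam * L2_inner \<mu> a1 (flip_velocity (P0 a0)) - L2_inner \<mu> a1 (flip_velocity r0)"
    using L2_inner_diff_right[OF a1 si(2)[OF Qa0 si(1)[OF QP0a0]] Qr0]
      L2_inner_diff_right[OF a1 Qa0 si(1)[OF QP0a0]] L2_inner_cmult_right[of \<mu> a1 lam]
      L2_inner_cong_AE[OF a1 f si(2)[OF si(2)[OF Qa0 si(1)[OF QP0a0]] Qr0]]
    by simp
  moreover have "L2_inner \<mu> a1 (flip_velocity (P0 a0)) = L2_inner \<mu> (flip_velocity a0) (P0 a1)"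
    using L2_inner_lifted_op_adjoint[OF rate0 Qa0 a1] by (simp add: L2_inner_commute)
  moreover have "AE z in \<mu>. a1 z - lam * P0 a1 z = (\<lambda>z. f z + r1 z) z + lam * extra_switching a1 z"
    using eq1 by eventually_elim (simp add: P1_eq_P0_plus_extra_switching algebra_simps)
  then have "L2_inner \<mu> (flip_velocity a0) a1 - lam * L2_inner \<mu> (flip_velocity a0) (P0 a1)
      = L2_inner \<mu> (flip_velocity a0) f + L2_inner \<mu> (flip_velocity a0) r1
        + lam * L2_inner \<mu> (flip_velocity a0) (extra_switching a1)"
    using L2_inner_diff_right[OF Qa0 a1 si(1)[OF P0a1, where c=lam]] L2_inner_cmult_right[of \<mu> "flip_velocity a0" lam]
      L2_inner_add_right[OF Qa0 si(3)[OF f r1] si(1)[OF Ea1, where c=lam]] L2_inner_add_right[OF Qa0 f r1]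
      L2_inner_cong_AE[OF Qa0 si(2)[OF a1 si(1)[OF P0a1, where c=lam]] si(3)[OF si(3)[OF f r1] si(1)[OF Ea1, where c=lam]]]
    by simp
  moreover have "L2_inner \<mu> (flip_velocity a0) f = L2_inner \<mu> f a0"
  proof -
    have "L2_inner \<mu> a0 (flip_velocity f) = L2_inner \<mu> a0 f"
      using f_flip by (intro L2_inner_cong_AE a0 f square_integrable_flip_velocity) (simp add: flip_velocity_def)
    then show ?thesis using L2_inner_flip_velocity[OF a0 f] by (simp add: L2_inner_commute)
  qed
  ultimately show ?thesis
    using L2_inner_flip_extra_switching[OF a0 a1] by (simp add: L2_inner_commute algebra_simps)
qed

lemma resolvent_difference_identity:
  assumes a0: "square_integrable \<mu> a0" and a1: "square_integrable \<mu> a1"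
    and r0: "square_integrable \<mu> r0" and r1: "square_integrable \<mu> r1"
    and eq0: "AE z in \<mu>. a0 z - lam * P0 a0 z = f z + r0 z"
    and eq1: "AE z in \<mu>. a1 z - lam * P1 a1 z = f z + r1 z"
  defines "d \<equiv> \<lambda>z. a1 z - a0 z"
  shows "L2_inner \<mu> d d - lam * L2_inner \<mu> d (P0 d)
    = L2_inner \<mu> d (\<lambda>z. r1 z - r0 z) + lam * L2_inner \<mu> a1 (extra_switching a1)
      - lam * L2_inner \<mu> a0 (extra_switching a1)"
proof -
  note si = square_integrable_cmult square_integrable_diff square_integrable_add
  have d: "square_integrable \<mu> d" unfolding d_def by (rule si(2)[OF a1 a0])
  have P0d: "square_integrable \<mu> (P0 d)" by (rule lifted_op_contraction(1)[OF rate0 d])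
  have Ea1: "square_integrable \<mu> (extra_switching a1)" by (rule square_integrable_extra_switching[OF a1])
  have "AE z in \<mu>. d z - lam * P0 d z = (\<lambda>z. r1 z - r0 z) z + lam * extra_switching a1 z"
    using lifted_op_diff_AE[OF a1 a0, of \<rho>0] eq0 eq1
  proof eventually_elim
    case (elim z)
    then have "d z - lam * P0 d z = a1 z - a0 z - (lam * P0 a1 z - lam * P0 a0 z)"
      by (simp add: d_def right_diff_distrib)
    moreover have "lam * P1 a1 z = lam * P0 a1 z + lam * extra_switching a1 z"
      by (simp add: P1_eq_P0_plus_extra_switching distrib_left)
    ultimately show ?case using elim(2,3) by linarith
  qed
  then have "L2_inner \<mu> d d - lam * L2_inner \<mu> d (P0 d)
      = L2_inner \<mu> d (\<lambda>z. r1 z - r0 z) + lam * L2_inner \<mu> d (extra_switching a1)"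
    using L2_inner_diff_right[OF d d si(1)[OF P0d, where c=lam]] L2_inner_cmult_right[of \<mu> d lam]
      L2_inner_add_right[OF d si(2)[OF r1 r0] si(1)[OF Ea1, where c=lam]]
      L2_inner_cong_AE[OF d si(2)[OF d si(1)[OF P0d, where c=lam]] si(3)[OF si(2)[OF r1 r0] si(1)[OF Ea1, where c=lam]]]
    by simp
  moreover have "L2_inner \<mu> d (extra_switching a1) = L2_inner \<mu> a1 (extra_switching a1) - L2_inner \<mu> a0 (extra_switching a1)"
    unfolding d_def by (rule L2_inner_diff_left[OF Ea1 a1 a0])
  ultimately show ?thesis by (simp add: algebra_simps)
qed

lemma resolvent_comparison:
  assumes f: "square_integrable \<mu> f" and a0: "square_integrable \<mu> a0" and a1: "square_integrable \<mu> a1"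
    and r0: "square_integrable \<mu> r0" and r1: "square_integrable \<mu> r1"
    and f_flip: "AE z in \<mu>. f (fst z, - snd z) = f z" and lam: "0 \<le> lam" "lam \<le> 1"
    and eq0: "AE z in \<mu>. a0 z - lam * P0 a0 z = f z + r0 z"
    and eq1: "AE z in \<mu>. a1 z - lam * P1 a1 z = f z + r1 z"
  shows "L2_inner \<mu> (flip_velocity a0) r1 - L2_inner \<mu> (flip_velocity r0) a1
      - L2_inner \<mu> (\<lambda>z. a1 z - a0 z) (\<lambda>z. r1 z - r0 z)
    \<le> L2_inner \<mu> f a1 - L2_inner \<mu> f a0"
proof -
  define d where "d z = a1 z - a0 z" for z
  have d: "square_integrable \<mu> d" unfolding d_def[abs_def] by (rule square_integrable_diff[OF a1 a0])
  have "lam * L2_inner \<mu> d (P0 d) \<le> lam * L2_inner \<mu> d d"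
    using L2_inner_lifted_op_le[OF rate0 d] lam(1) by (rule mult_left_mono)
  also have "\<dots> \<le> L2_inner \<mu> d d"
    using L2_inner_self_nonneg lam by (rule mult_left_le_one_le)
  finally have "0 \<le> L2_inner \<mu> d d - lam * L2_inner \<mu> d (P0 d)" by simp
  moreover have "0 \<le> - lam * L2_inner \<mu> a1 (extra_switching a1)"
    using L2_inner_extra_switching_self_nonpos[OF a1] lam(1) by (simp add: mult_nonneg_nonpos)
  ultimately show ?thesis
    using resolvent_cross_identity[OF f a0 a1 r0 r1 f_flip eq0 eq1]
      resolvent_difference_identity[OF a0 a1 r0 r1 eq0 eq1]
    unfolding d_def[abs_def] by simp
qed

lemma partial_resolvent_comparison:
  assumes f: "square_integrable \<mu> f" and f_flip: "AE z in \<mu>. f (fst z, - snd z) = f z"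
    and lam: "0 \<le> lam" "lam < 1"
  shows "L2_inner \<mu> f (partial_resolvent P0 lam N f)
      - lam ^ N * (3 * (L2_inner \<mu> f f / (1 - lam)\<^sup>2 + L2_inner \<mu> f f))
    \<le> L2_inner \<mu> f (partial_resolvent P1 lam N f)"
proof -
  define A B where "A = L2_inner \<mu> f f / (1 - lam)\<^sup>2" and "B = L2_inner \<mu> f f"
  define a0 a1 where "a0 = partial_resolvent P0 lam N f" and "a1 = partial_resolvent P1 lam N f"
  define p0 p1 where "p0 = (P0 ^^ N) f" and "p1 = (P1 ^^ N) f"
  define c where "c = - (lam ^ N)"
  have a0: "square_integrable \<mu> a0" and a1: "square_integrable \<mu> a1"
    unfolding a0_def a1_def using square_integrable_partial_resolvent rate0 rate1 f by auto
  have p0: "square_integrable \<mu> p0" and p1: "square_integrable \<mu> p1"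
    unfolding p0_def p1_def using lifted_op_power_contraction(1) rate0 rate1 f by auto
  have norm_a: "L2_inner \<mu> a0 a0 \<le> A" "L2_inner \<mu> a1 a1 \<le> A"
    unfolding a0_def a1_def A_def using L2_inner_partial_resolvent_le rate0 rate1 f lam by auto
  have norm_p: "L2_inner \<mu> p0 p0 \<le> B" "L2_inner \<mu> p1 p1 \<le> B"
    unfolding p0_def p1_def B_def using lifted_op_power_contraction(2) rate0 rate1 f by auto
  have "L2_inner \<mu> (flip_velocity a0) (\<lambda>z. c * p1 z) - L2_inner \<mu> (flip_velocity (\<lambda>z. c * p0 z)) a1
      - L2_inner \<mu> (\<lambda>z. a1 z - a0 z) (\<lambda>z. c * p1 z - c * p0 z)
    \<le> L2_inner \<mu> f a1 - L2_inner \<mu> f a0"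
  proof (rule resolvent_comparison[OF f a0 a1 square_integrable_cmult[OF p0] square_integrable_cmult[OF p1] f_flip])
    show "AE z in \<mu>. a0 z - lam * P0 a0 z = f z + c * p0 z"
      using partial_resolvent_equation_AE[OF rate0 f, of lam N] by (simp add: a0_def p0_def c_def)
    show "AE z in \<mu>. a1 z - lam * P1 a1 z = f z + c * p1 z"
      using partial_resolvent_equation_AE[OF rate1 f, of lam N] by (simp add: a1_def p1_def c_def)
  qed (use lam in auto)
  moreover have "L2_inner \<mu> (flip_velocity a0) (\<lambda>z. c * p1 z) - L2_inner \<mu> (flip_velocity (\<lambda>z. c * p0 z)) a1
      - L2_inner \<mu> (\<lambda>z. a1 z - a0 z) (\<lambda>z. c * p1 z - c * p0 z)
    = c * (L2_inner \<mu> (flip_velocity a0) p1 - L2_inner \<mu> (flip_velocity p0) a1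
      - L2_inner \<mu> (\<lambda>z. a1 z - a0 z) (\<lambda>z. p1 z - p0 z))"
  proof -
    have "flip_velocity (\<lambda>z. c * p0 z) = (\<lambda>z. c * flip_velocity p0 z)"
      by (simp add: flip_velocity_def fun_eq_iff)
    moreover have "L2_inner \<mu> (\<lambda>z. a1 z - a0 z) (\<lambda>z. c * p1 z - c * p0 z)
        = c * L2_inner \<mu> (\<lambda>z. a1 z - a0 z) (\<lambda>z. p1 z - p0 z)"
      using L2_inner_cmult_right[of \<mu> "\<lambda>z. a1 z - a0 z" c "\<lambda>z. p1 z - p0 z"] by (simp add: right_diff_distrib)
    ultimately show ?thesis
      by (simp add: L2_inner_cmult_right L2_inner_cmult_left right_diff_distrib)
  qed
  moreover have "L2_inner \<mu> (flip_velocity a0) p1 - L2_inner \<mu> (flip_velocity p0) a1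
      - L2_inner \<mu> (\<lambda>z. a1 z - a0 z) (\<lambda>z. p1 z - p0 z) \<le> 3 * (A + B)"
    by (rule L2_inner_remainder_le[OF a0 a1 p0 p1 norm_a norm_p])
  then have "c * (L2_inner \<mu> (flip_velocity a0) p1 - L2_inner \<mu> (flip_velocity p0) a1
      - L2_inner \<mu> (\<lambda>z. a1 z - a0 z) (\<lambda>z. p1 z - p0 z)) \<ge> - (lam ^ N * (3 * (A + B)))"
    unfolding c_def using lam by (simp add: mult_left_mono)
  ultimately show ?thesis
    unfolding a0_def a1_def A_def B_def by linarith
qed

lemma series_comparison:
  assumes f: "square_integrable \<mu> f" and f_flip: "AE z in \<mu>. f (fst z, - snd z) = f z"
    and lam: "0 \<le> lam" "lam < 1"
  shows "(\<Sum>k. lam ^ k * L2_inner \<mu> f ((P0 ^^ k) f)) \<le> (\<Sum>k. lam ^ k * L2_inner \<mu> f ((P1 ^^ k) f))"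
proof -
  define C where "C = 3 * (L2_inner \<mu> f f / (1 - lam)\<^sup>2 + L2_inner \<mu> f f)"
  have "(\<lambda>N. L2_inner \<mu> f (partial_resolvent P0 lam N f) - lam ^ N * C)
      \<longlonglongrightarrow> (\<Sum>k. lam ^ k * L2_inner \<mu> f ((P0 ^^ k) f)) - 0 * C"
    unfolding L2_inner_partial_resolvent[OF rate0 f]
    using summable_L2_inner_lifted_op_power[OF rate0 f] lam
    by (intro tendsto_diff tendsto_mult_right summable_LIMSEQ LIMSEQ_power_zero) auto
  moreover have "(\<lambda>N. L2_inner \<mu> f (partial_resolvent P1 lam N f)) \<longlonglongrightarrow> (\<Sum>k. lam ^ k * L2_inner \<mu> f ((P1 ^^ k) f))"
    unfolding L2_inner_partial_resolvent[OF rate1 f]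
    using summable_L2_inner_lifted_op_power[OF rate1 f] lam by (intro summable_LIMSEQ) auto
  ultimately show ?thesis
    using partial_resolvent_comparison[OF f f_flip lam] by (auto simp: C_def intro: LIMSEQ_le)
qed

end

context lifted_kernels
begin

lemma var_lambda_lifted_op:
  assumes \<rho>: "switching_rate \<pi> T \<rho>" and f: "square_integrable \<mu> f" and lam: "\<bar>lam\<bar> < 1"
  defines "f0 \<equiv> \<lambda>z. f z - integral\<^sup>L \<mu> f"
  shows "var_lambda \<mu> (lifted_op \<pi> T \<rho>) lam f
    = 2 * (\<Sum>k. lam ^ k * L2_inner \<mu> f0 ((lifted_op \<pi> T \<rho> ^^ k) f0)) - L2_inner \<mu> f0 f0"
proof -
  have f0: "square_integrable \<mu> f0"
    unfolding f0_def by (rule square_integrable_centred[OF f])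
  have "var_lambda \<mu> (lifted_op \<pi> T \<rho>) lam f
      = L2_inner \<mu> f0 f0 + 2 * (\<Sum>k. lam ^ Suc k * L2_inner \<mu> f0 ((lifted_op \<pi> T \<rho> ^^ Suc k) f0))"
    by (simp add: var_lambda_def L2_inner_def f0_def power2_eq_square)
  then show ?thesis
    using suminf_split_head[OF summable_L2_inner_lifted_op_power[OF \<rho> f0 lam]] by simp
qed

lemma var_lambda_lifted_op_mono:
  assumes rate0: "switching_rate \<pi> T \<rho>0" and rate1: "switching_rate \<pi> T \<rho>1"
    and rate_le: "\<And>v x. v \<in> {-1, 1} \<Longrightarrow> x \<in> space \<pi> \<Longrightarrow> \<rho>0 v x \<le> \<rho>1 v x"
    and f: "square_integrable \<mu> f" and f_flip: "AE z in \<mu>. f (fst z, - snd z) = f z"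
    and lam: "0 \<le> lam" "lam < 1"
  shows "var_lambda \<mu> (lifted_op \<pi> T \<rho>0) lam f \<le> var_lambda \<mu> (lifted_op \<pi> T \<rho>1) lam f"
proof -
  interpret rate_comparison \<pi> T \<rho>0 \<rho>1
    using rate0 rate1 rate_le by unfold_locales
  define f0 where "f0 z = f z - integral\<^sup>L \<mu> f" for z
  have "square_integrable \<mu> f0"
    unfolding f0_def by (rule square_integrable_centred[OF f])
  moreover have "AE z in \<mu>. f0 (fst z, - snd z) = f0 z"
    using f_flip by eventually_elim (simp add: f0_def)
  ultimately show ?thesis
    using series_comparison[of f0 lam] lam
    by (simp add: var_lambda_lifted_op[OF rate0 f] var_lambda_lifted_op[OF rate1 f] f0_def[abs_def])
qed
end

theorem theorem3p15:
  fixes \<pi> :: "'a measure" and T :: "int \<Rightarrow> 'a \<Rightarrow> 'a measure"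
    and \<rho> :: "int \<Rightarrow> 'a \<Rightarrow> real" and f :: "'a \<times> int \<Rightarrow> real" and lam :: real
  assumes "prob_space \<pi>"
    and "sub_stochastic_kernel \<pi> (T 1)" and "sub_stochastic_kernel \<pi> (T (-1))"
    and "\<And>A B. A \<in> sets \<pi> \<Longrightarrow> B \<in> sets \<pi> \<Longrightarrow>
           (\<integral>\<^sup>+ x. indicator A x * emeasure (T 1 x) B \<partial>\<pi>)
         = (\<integral>\<^sup>+ y. indicator B y * emeasure (T (-1) y) A \<partial>\<pi>)"
    and "switching_rate \<pi> T \<rho>"
    and "f \<in> borel_measurable (lift_measure \<pi>)"
    and "integrable (lift_measure \<pi>) (\<lambda>z. (f z)\<^sup>2)"
    and "AE z in lift_measure \<pi>. f (fst z, - snd z) = f z"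
    and "0 \<le> lam" and "lam < 1"
  shows "var_lambda (lift_measure \<pi>)
           (lifted_op \<pi> T (\<lambda>v x. max 0 (measure (T (-v) x) (space \<pi>) - measure (T v x) (space \<pi>)))) lam f
         \<le> var_lambda (lift_measure \<pi>) (lifted_op \<pi> T \<rho>) lam f
       \<and> var_lambda (lift_measure \<pi>) (lifted_op \<pi> T \<rho>) lam f
         \<le> var_lambda (lift_measure \<pi>)
             (lifted_op \<pi> T (\<lambda>v x. 1 - measure (T v x) (space \<pi>))) lam f"
proof -
  have "reversible_pair \<pi> (T 1) (T (-1))"
    using assms(1-4) unfolding reversible_pair_def reversible_pair_axioms_def sub_stochastic_kernel_def by blast
  then interpret lifted_kernels \<pi> T
    using assms(1) by (intro lifted_kernels.intro lifted_kernels_axioms.intro lifted_space.intro)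
  have f: "square_integrable (lift_measure \<pi>) f"
    using assms(6,7) by (simp add: square_integrable_def)
  show ?thesis
    using var_lambda_lifted_op_mono[OF switching_rate_minimal assms(5) switching_rate_minimal_le[OF assms(5)] f assms(8-10)]
      var_lambda_lifted_op_mono[OF assms(5) switching_rate_maximal switching_rateD(2)[OF assms(5)] f assms(8-10)]
    by blast
qed

end
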